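(* Consider the problem $$(\mathrm{CP})\qquad\inf_{\mathbf x\in\mathbb R^n}\{f(\mathbf x): g_i(\mathbf x)\le0,\ i=1,\dots,m\},$$ where $f=s_0+p_0$ and $g_i=s_i+p_i$ ($i=1,\dots,m$) are convex polynomials such that, for each $i=0,1,\dots,m$, $s_i(\mathbf x)=\sum_{j=1}^n u_i^j(x_j)$ with each $u_i^j$ a convex univariate polynomial in $x_j$ of degree at most $2d_j$, and $p_i$ is an SOS-convex polynomial of degree at most $2r$. Let $d_0:=\max_{1\le j\le n}d_j$ and assume $d_0>r$ and that $f$ is bounded from below on the feasible set $\mathbf F=\{\mathbf x: g_i(\mathbf x)\le0,\ i=1,\dots,m\}$. Assume there exists $\widehat{\mathbf x}\in\mathbf F$ with $g_i(\widehat{\mathbf x})<0$ for all $i$. If $\bar{\mathbf y}\in\mathbb R^{s(n,2d_0)}$ is an optimal solution of the problem $(\widetilde{\mathrm D}^{\mathrm{SPLD}}_{\mathrm{sos}})$ defined in the context, then $\bar{\mathbf x}:=(\bar y_{\boldsymbol\alpha})_{|\boldsymbol\alpha|=1}\in\mathbb R^n$ is an optimal solution of $(\mathrm{CP})$.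
   Context: A polynomial is SOS-convex if its Hessian is an SOS matrix polynomial, i.e., $\nabla^2 p(\mathbf x)=F(\mathbf x)^TF(\mathbf x)$ for some matrix polynomial $F$. $\mathbb N^n_d=\{\boldsymbol\alpha\in\mathbb N^n:|\boldsymbol\alpha|\le d\}$; $\lceil\mathbf x\rceil_r=(\mathbf x^{\boldsymbol\alpha})_{\boldsymbol\alpha\in\mathbb N^n_r}$; $s(n,d)=\binom{n+d}{d}$; $\lceil x_j\rceil_{d}=(1,x_j,\dots,x_j^{d})^T$; $(M)_{\boldsymbol\alpha}$ is the coefficient matrix of $\mathbf x^{\boldsymbol\alpha}$ in a polynomial matrix $M$, and $h_{\boldsymbol\alpha}$ the coefficient of $\mathbf x^{\boldsymbol\alpha}$ in a polynomial $h$. $(\widetilde{\mathrm D}^{\mathrm{SPLD}}_{\mathrm{sos}})$: minimize $\sum_{\boldsymbol\alpha\in\mathbb N^n_{2d_0}}f_{\boldsymbol\alpha}y_{\boldsymbol\alpha}$ over $\mathbf y=(y_{\boldsymbol\alpha})_{\boldsymbol\alpha\in\mathbb N^n_{2d_0}}\in\mathbb R^{s(n,2d_0)}$ subject to $\sum_{\boldsymbol\alpha\in\mathbb N^n_{2d_0}}(g_i)_{\boldsymbol\alpha}y_{\boldsymbol\alpha}\le0$, $i=1,\dots,m$; $\sum_{\boldsymbol\alpha\in\mathbb N^n_{2d_0}}y_{\boldsymbol\alpha}(\lceil x_j\rceil_{d_j}\lceil x_j\rceil_{d_j}^T)_{\boldsymbol\alpha}\succeq0$, $j=1,\dots,n$;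 $\sum_{\boldsymbol\alpha\in\mathbb N^n_{2d_0}}y_{\boldsymbol\alpha}(\lceil\mathbf x\rceil_r\lceil\mathbf x\rceil_r^T)_{\boldsymbol\alpha}\succeq0$; $y_{\mathbf 0}=1$. *)

theory Defs
  imports "HOL-Analysis.Analysis" "HOL-Computational_Algebra.Polynomial"
begin

text \<open>Multivariate real polynomials in the variables x_j (j :: 'n, a finite type,
  so that n = CARD('n)) are represented by their coefficient functions
  c :: ('n \<Rightarrow> nat) \<Rightarrow> real (multi-index to coefficient) with finite support.\<close>

type_synonym 'n mpoly_coeffs = "('n \<Rightarrow> nat) \<Rightarrow> real"

definition is_mpoly :: "'n mpoly_coeffs \<Rightarrow> bool" where
  "is_mpoly c \<longleftrightarrow> finite {\<alpha>. c \<alpha> \<noteq> 0}"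

definition mdeg_le :: "'n::finite mpoly_coeffs \<Rightarrow> nat \<Rightarrow> bool" where
  "mdeg_le c D \<longleftrightarrow> (\<forall>\<alpha>. c \<alpha> \<noteq> 0 \<longrightarrow> sum \<alpha> UNIV \<le> D)"

definition mono_set :: "nat \<Rightarrow> ('n::finite \<Rightarrow> nat) set" where
  "mono_set D = {\<alpha>. sum \<alpha> UNIV \<le> D}"

definition monomial_val :: "('n::finite \<Rightarrow> nat) \<Rightarrow> real^'n \<Rightarrow> real" where
  "monomial_val \<alpha> x = (\<Prod>j\<in>UNIV. (x $ j) ^ (\<alpha> j))"

definition peval :: "'n::finite mpoly_coeffs \<Rightarrow> real^'n \<Rightarrow> real" where
  "peval c x = (\<Sum>\<alpha>\<in>{\<alpha>. c \<alpha> \<noteq> 0}. c \<alpha> * monomial_val \<alpha> x)"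

definition pdiff :: "'n \<Rightarrow> 'n mpoly_coeffs \<Rightarrow> 'n mpoly_coeffs" where
  "pdiff k c = (\<lambda>\<alpha>. real (\<alpha> k + 1) * c (\<alpha>(k := \<alpha> k + 1)))"

definition sos_convex :: "'n::finite mpoly_coeffs \<Rightarrow> bool" where
  "sos_convex c \<longleftrightarrow> (\<exists>(q::nat) (F :: nat \<Rightarrow> 'n \<Rightarrow> 'n mpoly_coeffs).
      (\<forall>t<q. \<forall>k. is_mpoly (F t k)) \<and>
      (\<forall>k l x. peval (pdiff k (pdiff l c)) x = (\<Sum>t<q. peval (F t k) x * peval (F t l) x)))"

definition psd_on :: "'i set \<Rightarrow> ('i \<Rightarrow> 'i \<Rightarrow> real) \<Rightarrow> bool" where
  "psd_on I M \<longleftrightarrow> (\<forall>v. 0 \<le> (\<Sum>a\<in>I. \<Sum>b\<in>I. v a * M a b * v b))"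

definition unit_idx :: "'n \<Rightarrow> ('n \<Rightarrow> nat)" where
  "unit_idx j = (\<lambda>k. if k = j then 1 else 0)"

definition pow_idx :: "'n \<Rightarrow> nat \<Rightarrow> ('n \<Rightarrow> nat)" where
  "pow_idx j a = (\<lambda>k. if k = j then a else 0)"

text \<open>Localized moment matrices.
  sum over alpha in N^n_{2 d0} of y_alpha times the coefficient matrix of x^alpha in
  ceil(x_j)_{dj} ceil(x_j)_{dj}^T  (entries indexed by 0..dj, entry (a,b) = x_j^(a+b)).\<close>
definition univ_moment_matrix ::
  "nat \<Rightarrow> (('n::finite \<Rightarrow> nat) \<Rightarrow> real) \<Rightarrow> 'n \<Rightarrow> nat \<Rightarrow> nat \<Rightarrow> real" where
  "univ_moment_matrix D y j a b =
     (\<Sum>\<alpha>\<in>mono_set D. y \<alpha> * (if pow_idx j (a + b) = \<alpha> then 1 else 0))"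

text \<open>sum over alpha in N^n_{D} of y_alpha times the coefficient matrix of x^alpha in
  ceil(x)_r ceil(x)_r^T (entries indexed by beta, gamma in N^n_r, entry = x^(beta+gamma)).\<close>
definition moment_matrix ::
  "nat \<Rightarrow> (('n::finite \<Rightarrow> nat) \<Rightarrow> real) \<Rightarrow> ('n \<Rightarrow> nat) \<Rightarrow> ('n \<Rightarrow> nat) \<Rightarrow> real" where
  "moment_matrix D y \<beta> \<gamma> =
     (\<Sum>\<alpha>\<in>mono_set D. y \<alpha> * (if (\<lambda>k. \<beta> k + \<gamma> k) = \<alpha> then 1 else 0))"

definition lin_fun :: "nat \<Rightarrow> 'n::finite mpoly_coeffs \<Rightarrow> (('n \<Rightarrow> nat) \<Rightarrow> real) \<Rightarrow> real" where
  "lin_fun D h y = (\<Sum>\<alpha>\<in>mono_set D. h \<alpha> * y \<alpha>)"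

definition spld_feasible ::
  "nat \<Rightarrow> nat \<Rightarrow> ('n::finite \<Rightarrow> nat) \<Rightarrow> nat \<Rightarrow> (nat \<Rightarrow> 'n mpoly_coeffs)
     \<Rightarrow> (('n \<Rightarrow> nat) \<Rightarrow> real) \<Rightarrow> bool" where
  "spld_feasible d0 m d r g y \<longleftrightarrow>
     (\<forall>i\<in>{1..m}. lin_fun (2*d0) (g i) y \<le> 0) \<and>
     (\<forall>j. psd_on {0..d j} (univ_moment_matrix (2*d0) y j)) \<and>
     psd_on (mono_set r) (moment_matrix (2*d0) y) \<and>
     y (\<lambda>_. 0) = 1"

definition spld_optimal ::
  "nat \<Rightarrow> nat \<Rightarrow> ('n::finite \<Rightarrow> nat) \<Rightarrow> nat \<Rightarrow> 'n mpoly_coeffs \<Rightarrow> (nat \<Rightarrow> 'n mpoly_coeffs)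
     \<Rightarrow> (('n \<Rightarrow> nat) \<Rightarrow> real) \<Rightarrow> bool" where
  "spld_optimal d0 m d r f g y \<longleftrightarrow>
     spld_feasible d0 m d r g y \<and>
     (\<forall>y'. spld_feasible d0 m d r g y' \<longrightarrow> lin_fun (2*d0) f y \<le> lin_fun (2*d0) f y')"

end

theory Submission
  imports Defs "HOL-Computational_Algebra.Fundamental_Theorem_Algebra"
begin

text \<open>
  The moment vector \<open>ybar\<close> induces the linear functional \<open>L\<close>, \<open>x\<^sup>\<alpha> \<mapsto> ybar\<^sub>\<alpha>\<close>, on polynomials
  of degree at most \<open>2 d0\<close>, and \<open>xbar = (L x\<^sub>1, ..., L x\<^sub>n)\<close>. The psd constraints make \<open>L\<close>
  nonnegative on squares of univariate polynomials in \<open>x\<^sub>j\<close> of degree at most \<open>d\<^sub>j\<close> and on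
  squares of polynomials of degree at most \<open>r\<close>. This yields the Jensen inequality
  \<open>h(xbar) \<le> L(h)\<close> for every \<open>h = \<Sum>\<^sub>j u\<^sub>j(x\<^sub>j) + p\<close> with convex \<open>u\<^sub>j\<close> and SOS-convex \<open>p\<close>:
  a convex univariate polynomial minus its tangent at \<open>L x\<^sub>j\<close> is nonnegative, hence a sum of
  two squares of degree at most \<open>d\<^sub>j\<close>; and \<open>\<phi>(s) = L(p(xbar + s(x - xbar)))\<close> has \<open>\<phi>'(0) = 0\<close>
  and \<open>\<phi>'' = L(\<Sum>\<^sub>t G\<^sub>t\<^sup>2) \<ge> 0\<close>, the \<open>G\<^sub>t\<close> coming from the SOS factorisation of the Hessian.
  Hence \<open>g\<^sub>i(xbar) \<le> L(g\<^sub>i) \<le> 0\<close>, and \<open>f(xbar) \<le> L(f) \<le> f(x)\<close> for every feasible \<open>x\<close>, because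
  the moment vector \<open>(x\<^sup>\<alpha>)\<^sub>\<alpha>\<close> of a feasible point is feasible for the relaxation.
\<close>

section \<open>Multi-indices and monomials\<close>

lemma finite_mono_set: "finite (mono_set D :: ('n::finite \<Rightarrow> nat) set)"
proof (rule finite_subset)
  show "mono_set D \<subseteq> {\<alpha>::'n \<Rightarrow> nat. \<forall>x. (x \<in> UNIV \<longrightarrow> \<alpha> x \<in> {..D}) \<and> (x \<notin> UNIV \<longrightarrow> \<alpha> x = 0)}"
  proof
    fix \<alpha> :: "'n \<Rightarrow> nat" assume "\<alpha> \<in> mono_set D"
    moreover have "\<alpha> x \<le> sum \<alpha> UNIV" for x by (rule member_le_sum) auto
    ultimately show "\<alpha> \<in> {\<alpha>. \<forall>x. (x \<in> UNIV \<longrightarrow> \<alpha> x \<in> {..D}) \<and> (x \<notin> UNIV \<longrightarrow> \<alpha> x = 0)}"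
      by (auto simp: mono_set_def intro: order_trans)
  qed
  show "finite {\<alpha>::'n \<Rightarrow> nat. \<forall>x. (x \<in> UNIV \<longrightarrow> \<alpha> x \<in> {..D}) \<and> (x \<notin> UNIV \<longrightarrow> \<alpha> x = 0)}"
    by (rule finite_set_of_finite_funs) auto
qed

lemma mono_set_mono: "D \<le> D' \<Longrightarrow> mono_set D \<subseteq> mono_set D'"
  by (auto simp: mono_set_def)

lemma mono_set_add:
  "\<alpha> \<in> mono_set D1 \<Longrightarrow> \<beta> \<in> mono_set D2 \<Longrightarrow> (\<lambda>k. \<alpha> k + \<beta> k) \<in> mono_set (D1 + D2)"
  by (simp add: mono_set_def sum.distrib add_mono)

lemma zero_in_mono_set [simp]: "(\<lambda>_. 0) \<in> mono_set D"
  by (simp add: mono_set_def)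

lemma unit_idx_in_mono_set: "1 \<le> D \<Longrightarrow> unit_idx k \<in> mono_set D"
  by (simp add: mono_set_def unit_idx_def)

lemma pow_idx_in_mono_set: "i \<le> D \<Longrightarrow> pow_idx j i \<in> mono_set D"
  by (simp add: mono_set_def pow_idx_def)

lemma pow_idx_add: "(\<lambda>k. pow_idx j a k + pow_idx j b k) = pow_idx j (a + b)"
  by (auto simp: pow_idx_def)

lemma monomial_val_zero [simp]: "monomial_val (\<lambda>_. 0) x = 1"
  by (simp add: monomial_val_def)

lemma monomial_val_add: "monomial_val (\<lambda>k. \<beta> k + \<gamma> k) x = monomial_val \<beta> x * monomial_val \<gamma> x"
  by (simp add: monomial_val_def power_add prod.distrib)

lemma monomial_val_unit_idx: "monomial_val (unit_idx k) x = x $ k"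
  by (simp add: monomial_val_def unit_idx_def if_distrib[of "\<lambda>e. _ ^ e"] prod.If_cases)

lemma monomial_val_pow_idx: "monomial_val (pow_idx j i) x = (x $ j) ^ i"
  by (simp add: monomial_val_def pow_idx_def if_distrib[of "\<lambda>e. _ ^ e"] prod.If_cases)

lemma monomial_val_scaleR: "monomial_val \<alpha> (l *\<^sub>R x) = l ^ sum \<alpha> UNIV * monomial_val \<alpha> x"
  by (simp add: monomial_val_def power_mult_distrib prod.distrib power_sum)

lemma monomial_val_at_0: "monomial_val \<alpha> 0 = (if \<alpha> = (\<lambda>_. 0) then 1 else 0)"
proof (cases "\<alpha> = (\<lambda>_. 0)")
  case False
  then obtain k where "\<alpha> k \<noteq> 0" by auto
  then have "(\<Prod>j\<in>UNIV. (0::real) ^ \<alpha> j) = 0" by (intro prod_zero) auto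
  then show ?thesis using False by (simp add: monomial_val_def)
qed simp

lemma has_real_derivative_monomial_line:
  fixes a v :: "real^'n::finite"
  shows "((\<lambda>s. monomial_val \<alpha> (a + s *\<^sub>R v)) has_real_derivative
     (\<Sum>k\<in>UNIV. v $ k * (real (\<alpha> k) * monomial_val (\<alpha>(k := \<alpha> k - 1)) (a + s *\<^sub>R v)))) (at s)"
proof -
  have "((\<lambda>s. \<Prod>j\<in>UNIV. (a $ j + s * v $ j) ^ \<alpha> j) has_real_derivative
     (\<Sum>k\<in>UNIV. real (\<alpha> k) * (a $ k + s * v $ k) ^ (\<alpha> k - 1) * v $ k *
        (\<Prod>j\<in>UNIV - {k}. (a $ j + s * v $ j) ^ \<alpha> j))) (at s)"
    by (rule has_field_derivative_prod) (auto intro!: derivative_eq_intros)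
  moreover have "monomial_val (\<alpha>(k := \<alpha> k - 1)) (a + s *\<^sub>R v) =
      (a $ k + s * v $ k) ^ (\<alpha> k - 1) * (\<Prod>j\<in>UNIV - {k}. (a $ j + s * v $ j) ^ \<alpha> j)" for k
    unfolding monomial_val_def by (subst prod.remove[of _ k]) auto
  ultimately show ?thesis
    by (simp add: monomial_val_def mult_ac)
qed

section \<open>Coefficient polynomials: evaluation and formal derivatives\<close>

lemma peval_eq_sum_superset:
  assumes "finite S" "{\<alpha>. c \<alpha> \<noteq> 0} \<subseteq> S"
  shows "peval c x = (\<Sum>\<alpha>\<in>S. c \<alpha> * monomial_val \<alpha> x)"
  unfolding peval_def by (rule sum.mono_neutral_left) (use assms in auto)

lemma peval_at_0: "is_mpoly c \<Longrightarrow> peval c 0 = c (\<lambda>_. 0)"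
  by (subst peval_eq_sum_superset[of "insert (\<lambda>_. 0) {\<alpha>. c \<alpha> \<noteq> 0}"])
     (auto simp: is_mpoly_def monomial_val_at_0 if_distrib[of "\<lambda>t. _ * t"] sum.If_cases)

lemma pdiff_eq_0_iff_coeff: "pdiff k c \<beta> = 0 \<longleftrightarrow> c (\<beta>(k := \<beta> k + 1)) = 0"
  by (simp add: pdiff_def)

lemma is_mpoly_pdiff:
  assumes "is_mpoly c"
  shows "is_mpoly (pdiff k c)"
proof -
  have supp: "{\<beta>. pdiff k c \<beta> \<noteq> 0} \<subseteq> (\<lambda>\<alpha>. \<alpha>(k := \<alpha> k - 1)) ` {\<alpha>. c \<alpha> \<noteq> 0}"
    by (auto simp: pdiff_eq_0_iff_coeff intro!: image_eqI[of _ _ "_(k := _ k + 1)"])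
  show ?thesis
    using assms unfolding is_mpoly_def by (intro finite_subset[OF supp] finite_imageI)
qed

lemma peval_pdiff:
  assumes "is_mpoly c"
  shows "peval (pdiff k c) x =
    (\<Sum>\<alpha>\<in>{\<alpha>. c \<alpha> \<noteq> 0}. c \<alpha> * (real (\<alpha> k) * monomial_val (\<alpha>(k := \<alpha> k - 1)) x))"
proof -
  let ?S = "{\<alpha>. c \<alpha> \<noteq> 0 \<and> 0 < \<alpha> k}"
  let ?dec = "\<lambda>\<alpha>. \<alpha>(k := \<alpha> k - 1)"
  have fin: "finite ?S" using assms by (auto simp: is_mpoly_def)
  have inj: "inj_on ?dec ?S"
  proof (rule inj_onI)
    fix \<alpha> \<beta> assume "\<alpha> \<in> ?S" "\<beta> \<in> ?S" "?dec \<alpha> = ?dec \<beta>"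
    show "\<alpha> = \<beta>"
    proof
      fix j
      have "?dec \<alpha> j = ?dec \<beta> j" using \<open>?dec \<alpha> = ?dec \<beta>\<close> by simp
      then show "\<alpha> j = \<beta> j" using \<open>\<alpha> \<in> ?S\<close> \<open>\<beta> \<in> ?S\<close> by (cases "j = k") auto
    qed
  qed
  have supp: "{\<beta>. pdiff k c \<beta> \<noteq> 0} \<subseteq> ?dec ` ?S"
    by (auto simp: pdiff_eq_0_iff_coeff intro!: image_eqI[of _ _ "_(k := _ k + 1)"])
  have "peval (pdiff k c) x = (\<Sum>\<beta>\<in>?dec ` ?S. pdiff k c \<beta> * monomial_val \<beta> x)"
    using fin supp by (intro peval_eq_sum_superset) auto
  also have "\<dots> = (\<Sum>\<alpha>\<in>?S. pdiff k c (?dec \<alpha>) * monomial_val (?dec \<alpha>) x)"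
    by (rule sum.reindex[OF inj, unfolded comp_def])
  also have "\<dots> = (\<Sum>\<alpha>\<in>?S. c \<alpha> * (real (\<alpha> k) * monomial_val (?dec \<alpha>) x))"
  proof (rule sum.cong[OF refl])
    fix \<alpha> assume "\<alpha> \<in> ?S"
    then have "(?dec \<alpha>)(k := ?dec \<alpha> k + 1) = \<alpha>" "?dec \<alpha> k + 1 = \<alpha> k" by auto
    then show "pdiff k c (?dec \<alpha>) * monomial_val (?dec \<alpha>) x = c \<alpha> * (real (\<alpha> k) * monomial_val (?dec \<alpha>) x)"
      unfolding pdiff_def by (metis mult.assoc mult.commute of_nat_add)
  qed
  also have "\<dots> = (\<Sum>\<alpha>\<in>{\<alpha>. c \<alpha> \<noteq> 0}. c \<alpha> * (real (\<alpha> k) * monomial_val (?dec \<alpha>) x))"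
    by (rule sum.mono_neutral_left) (use assms in \<open>auto simp: is_mpoly_def\<close>)
  finally show ?thesis .
qed

lemma has_real_derivative_peval_line:
  fixes a v :: "real^'n::finite"
  assumes "is_mpoly c"
  shows "((\<lambda>s. peval c (a + s *\<^sub>R v)) has_real_derivative
     (\<Sum>k\<in>UNIV. v $ k * peval (pdiff k c) (a + s *\<^sub>R v))) (at s)"
proof -
  let ?z = "a + s *\<^sub>R v"
  have "((\<lambda>s. \<Sum>\<alpha>\<in>{\<alpha>. c \<alpha> \<noteq> 0}. c \<alpha> * monomial_val \<alpha> (a + s *\<^sub>R v)) has_real_derivative
     (\<Sum>\<alpha>\<in>{\<alpha>. c \<alpha> \<noteq> 0}. c \<alpha> *
        (\<Sum>k\<in>UNIV. v $ k * (real (\<alpha> k) * monomial_val (\<alpha>(k := \<alpha> k - 1)) ?z)))) (at s)"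
    by (intro DERIV_sum DERIV_cmult has_real_derivative_monomial_line)
  also have "(\<Sum>\<alpha>\<in>{\<alpha>. c \<alpha> \<noteq> 0}. c \<alpha> *
        (\<Sum>k\<in>UNIV. v $ k * (real (\<alpha> k) * monomial_val (\<alpha>(k := \<alpha> k - 1)) ?z)))
      = (\<Sum>k\<in>UNIV. v $ k * peval (pdiff k c) ?z)"
    by (simp add: peval_pdiff[OF assms] sum_distrib_left mult.left_commute sum.swap[of _ UNIV])
  finally show ?thesis unfolding peval_def .
qed

lemma sum_fun_upd_UNIV: "sum (\<beta>(k := v)) (UNIV::'n::finite set) + \<beta> k = sum \<beta> UNIV + (v::nat)"
proof -
  have "sum (\<beta>(k := v)) UNIV = v + sum \<beta> (UNIV - {k})"
    by (subst sum.remove[of _ k]) (auto intro: sum.cong)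
  moreover have "sum \<beta> UNIV = \<beta> k + sum \<beta> (UNIV - {k})"
    by (subst sum.remove[of _ k]) auto
  ultimately show ?thesis by simp
qed

lemma mdeg_le_pdiff: "mdeg_le c (Suc D) \<Longrightarrow> mdeg_le (pdiff k c) D"
proof (unfold mdeg_le_def, intro allI impI)
  fix \<beta> assume deg: "\<forall>\<alpha>. c \<alpha> \<noteq> 0 \<longrightarrow> sum \<alpha> UNIV \<le> Suc D" and "pdiff k c \<beta> \<noteq> 0"
  then have "c (\<beta>(k := \<beta> k + 1)) \<noteq> 0" by (simp add: pdiff_eq_0_iff_coeff)
  with deg have "sum (\<beta>(k := \<beta> k + 1)) UNIV \<le> Suc D" by blast
  with sum_fun_upd_UNIV[of \<beta> k "\<beta> k + 1"] show "sum \<beta> UNIV \<le> D" by simp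
qed

lemma mdeg_le_exists: "is_mpoly c \<Longrightarrow> \<exists>D. mdeg_le c D"
  unfolding is_mpoly_def mdeg_le_def
  by (rule exI[of _ "Max ((\<lambda>\<alpha>. sum \<alpha> UNIV) ` {\<alpha>. c \<alpha> \<noteq> 0})"]) auto

lemma mdeg_le_mono: "mdeg_le c D \<Longrightarrow> D \<le> D' \<Longrightarrow> mdeg_le c D'"
  by (auto simp: mdeg_le_def)

lemma peval_pdiff_eq_0:
  assumes "is_mpoly c" "\<And>x. peval c x = 0"
  shows "peval (pdiff k c) x = 0"
proof -
  let ?v = "axis k (1::real)"
  have "((\<lambda>s. peval c (x + s *\<^sub>R ?v)) has_real_derivative
      (\<Sum>j\<in>UNIV. ?v $ j * peval (pdiff j c) (x + 0 *\<^sub>R ?v))) (at 0)"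
    by (rule has_real_derivative_peval_line[OF assms(1)])
  moreover have "(\<Sum>j\<in>UNIV. ?v $ j * peval (pdiff j c) (x + 0 *\<^sub>R ?v)) = peval (pdiff k c) x"
    by (simp add: axis_def if_distrib[of "\<lambda>t. t * _"] sum.If_cases)
  ultimately show ?thesis
    using DERIV_unique[of "\<lambda>_. 0" 0] assms(2) by fastforce
qed

lemma coeff_eq_0_if_pdiff_eq_0:
  assumes "\<And>k. pdiff k c = (\<lambda>_. 0)" "\<alpha> \<noteq> (\<lambda>_. 0)"
  shows "c \<alpha> = 0"
proof -
  obtain k where k: "\<alpha> k > 0" using assms(2) by (metis gr0I)
  then have "(\<alpha>(k := \<alpha> k - 1))(k := (\<alpha>(k := \<alpha> k - 1)) k + 1) = \<alpha>" by auto
  moreover have "pdiff k c (\<alpha>(k := \<alpha> k - 1)) = 0" using assms(1) by simp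
  ultimately have "real (\<alpha> k) * c \<alpha> = 0" unfolding pdiff_def using k by simp
  then show ?thesis using k by simp
qed

lemma mpoly_eq_0_if_peval_eq_0:
  assumes "is_mpoly c" "\<And>x. peval c x = 0"
  shows "c = (\<lambda>_. 0)"
proof -
  obtain D where "mdeg_le c D" using mdeg_le_exists[OF assms(1)] by blast
  with assms show ?thesis
  proof (induction D arbitrary: c)
    case 0
    have "c (\<lambda>_. 0) = 0" using peval_at_0[OF "0.prems"(1)] "0.prems"(2) by simp
    moreover have "c \<alpha> = 0" if "\<alpha> \<noteq> (\<lambda>_. 0)" for \<alpha>
      using "0.prems"(3) that by (auto simp: mdeg_le_def)
    ultimately show ?case by (metis ext)
  next
    case (Suc D)
    have "c (\<lambda>_. 0) = 0" using peval_at_0[OF Suc.prems(1)] Suc.prems(2) by simp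
    moreover have "pdiff k c = (\<lambda>_. 0)" for k
      using Suc.IH[OF is_mpoly_pdiff[OF Suc.prems(1)]] peval_pdiff_eq_0[OF Suc.prems(1,2)]
        mdeg_le_pdiff[OF Suc.prems(3)] by blast
    ultimately show ?case using coeff_eq_0_if_pdiff_eq_0[of c] by (metis ext)
  qed
qed

section \<open>Polynomial functions of bounded degree and the Riesz functional\<close>

definition mpoly_fun :: "nat \<Rightarrow> (('n::finite \<Rightarrow> nat) \<Rightarrow> real) \<Rightarrow> real^'n \<Rightarrow> real" where
  "mpoly_fun D c x = (\<Sum>\<alpha>\<in>mono_set D. c \<alpha> * monomial_val \<alpha> x)"

definition polyfun :: "nat \<Rightarrow> (real^'n::finite \<Rightarrow> real) \<Rightarrow> bool" where
  "polyfun D \<phi> \<longleftrightarrow> (\<exists>c. \<phi> = mpoly_fun D c)"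

text \<open>The Riesz functional \<open>L\<^sub>y\<close>, sending \<open>x\<^sup>\<alpha>\<close> to \<open>y\<^sub>\<alpha>\<close>. It is meaningful only when
  \<open>polyfun D \<phi>\<close>, whose coefficients on \<open>mono_set D\<close> are unique (\<open>mpoly_fun_coeffs_unique\<close>);
  elsewhere its value is junk.\<close>
definition riesz :: "nat \<Rightarrow> (('n::finite \<Rightarrow> nat) \<Rightarrow> real) \<Rightarrow> (real^'n \<Rightarrow> real) \<Rightarrow> real" where
  "riesz D y \<phi> = lin_fun D (SOME c. \<phi> = mpoly_fun D c) y"

lemma peval_eq_mpoly_fun:
  assumes "is_mpoly c" "mdeg_le c D"
  shows "peval c = mpoly_fun D c"
proof
  fix x
  show "peval c x = mpoly_fun D c x"
    unfolding mpoly_fun_def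
    by (rule peval_eq_sum_superset[OF finite_mono_set])
       (use assms in \<open>auto simp: mdeg_le_def mono_set_def\<close>)
qed

lemma mpoly_fun_coeffs_unique:
  assumes "mpoly_fun D c = mpoly_fun D c'" "\<alpha> \<in> mono_set D"
  shows "c \<alpha> = c' \<alpha>"
proof -
  let ?e = "\<lambda>\<alpha>. if \<alpha> \<in> mono_set D then c \<alpha> - c' \<alpha> else 0"
  have e: "is_mpoly ?e" "mdeg_le ?e D"
    unfolding is_mpoly_def mdeg_le_def
    by (auto intro: finite_subset[OF _ finite_mono_set[of D]] simp: mono_set_def split: if_splits)
  have "peval ?e x = mpoly_fun D c x - mpoly_fun D c' x" for x
    by (simp add: peval_eq_mpoly_fun[OF e] mpoly_fun_def sum_subtractf[symmetric] algebra_simps)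
  then have "?e = (\<lambda>_. 0)" using mpoly_eq_0_if_peval_eq_0[OF e(1)] assms(1) by simp
  then show ?thesis using fun_cong[of ?e "\<lambda>_. 0" \<alpha>] assms(2) by simp
qed

lemma riesz_mpoly_fun: "riesz D y (mpoly_fun D c) = lin_fun D c y"
proof -
  have "mpoly_fun D c = mpoly_fun D (SOME c'. mpoly_fun D c = mpoly_fun D c')"
    by (rule someI[of _ c]) (rule refl)
  then have "\<forall>\<alpha>\<in>mono_set D. (SOME c'. mpoly_fun D c = mpoly_fun D c') \<alpha> = c \<alpha>"
    using mpoly_fun_coeffs_unique by metis
  then show ?thesis unfolding riesz_def lin_fun_def by (intro sum.cong) auto
qed

lemma mpoly_fun_delta:
  assumes "\<beta> \<in> mono_set D"
  shows "mpoly_fun D (\<lambda>\<alpha>. if \<alpha> = \<beta> then k else 0) = (\<lambda>x. k * monomial_val \<beta> x)"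
proof
  fix x
  have "mpoly_fun D (\<lambda>\<alpha>. if \<alpha> = \<beta> then k else 0) x
      = (\<Sum>\<alpha>\<in>mono_set D. if \<alpha> = \<beta> then k * monomial_val \<beta> x else 0)"
    unfolding mpoly_fun_def by (rule sum.cong) auto
  then show "mpoly_fun D (\<lambda>\<alpha>. if \<alpha> = \<beta> then k else 0) x = k * monomial_val \<beta> x"
    using assms by (simp add: sum.delta[OF finite_mono_set])
qed

lemma lin_fun_delta:
  assumes "\<beta> \<in> mono_set D"
  shows "lin_fun D (\<lambda>\<alpha>. if \<alpha> = \<beta> then k else 0) y = k * y \<beta>"
proof -
  have "lin_fun D (\<lambda>\<alpha>. if \<alpha> = \<beta> then k else 0) y = (\<Sum>\<alpha>\<in>mono_set D. if \<alpha> = \<beta> then k * y \<beta> else 0)"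
    unfolding lin_fun_def by (rule sum.cong) auto
  then show ?thesis using assms by (simp add: sum.delta[OF finite_mono_set])
qed

lemma polyfun_mpoly_fun [simp]: "polyfun D (mpoly_fun D c)"
  by (auto simp: polyfun_def)

lemma mpoly_fun_add: "(\<lambda>x. mpoly_fun D c x + mpoly_fun D c' x) = mpoly_fun D (\<lambda>\<alpha>. c \<alpha> + c' \<alpha>)"
  by (auto simp: mpoly_fun_def sum.distrib algebra_simps)

lemma mpoly_fun_cmult: "(\<lambda>x. k * mpoly_fun D c x) = mpoly_fun D (\<lambda>\<alpha>. k * c \<alpha>)"
  by (auto simp: mpoly_fun_def sum_distrib_left algebra_simps)

lemma polyfun_add: "polyfun D \<phi> \<Longrightarrow> polyfun D \<psi> \<Longrightarrow> polyfun D (\<lambda>x. \<phi> x + \<psi> x)"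
  unfolding polyfun_def using mpoly_fun_add by metis

lemma polyfun_cmult: "polyfun D \<phi> \<Longrightarrow> polyfun D (\<lambda>x. k * \<phi> x)"
  unfolding polyfun_def using mpoly_fun_cmult by metis

lemma polyfun_monomial: "\<beta> \<in> mono_set D \<Longrightarrow> polyfun D (monomial_val \<beta>)"
  unfolding polyfun_def
  by (rule exI[of _ "\<lambda>\<alpha>. if \<alpha> = \<beta> then 1 else 0"]) (simp add: mpoly_fun_delta)

lemma polyfun_const: "polyfun D (\<lambda>x. k)"
  using polyfun_cmult[OF polyfun_monomial[OF zero_in_mono_set], of D k] by simp

lemma polyfun_diff: "polyfun D \<phi> \<Longrightarrow> polyfun D \<psi> \<Longrightarrow> polyfun D (\<lambda>x. \<phi> x - \<psi> x)"
  using polyfun_add[of D \<phi> "\<lambda>x. (-1) * \<psi> x"] polyfun_cmult[of D \<psi> "-1"] by simp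

lemma polyfun_sum:
  "finite I \<Longrightarrow> (\<And>i. i \<in> I \<Longrightarrow> polyfun D (\<phi> i)) \<Longrightarrow> polyfun D (\<lambda>x. \<Sum>i\<in>I. \<phi> i x)"
  by (induction I rule: finite_induct) (auto intro: polyfun_const polyfun_add)

lemma polyfun_coord: "1 \<le> D \<Longrightarrow> polyfun D (\<lambda>x. x $ k)"
  using polyfun_monomial[OF unit_idx_in_mono_set] by (simp add: monomial_val_unit_idx[abs_def])

lemma polyfun_mono:
  assumes "polyfun D \<phi>" "D \<le> D'"
  shows "polyfun D' \<phi>"
proof -
  obtain c where c: "\<phi> = mpoly_fun D c" using assms(1) by (auto simp: polyfun_def)
  have "mpoly_fun D c = mpoly_fun D' (\<lambda>\<alpha>. if \<alpha> \<in> mono_set D then c \<alpha> else 0)"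
    unfolding mpoly_fun_def
    by (intro ext sum.mono_neutral_cong_left finite_mono_set mono_set_mono[OF assms(2)]) auto
  then show ?thesis using c by (auto simp: polyfun_def)
qed

lemma polyfun_mult:
  assumes "polyfun D1 \<phi>" "polyfun D2 \<psi>"
  shows "polyfun (D1 + D2) (\<lambda>x. \<phi> x * \<psi> x)"
proof -
  obtain c c' where c: "\<phi> = mpoly_fun D1 c" "\<psi> = mpoly_fun D2 c'"
    using assms by (auto simp: polyfun_def)
  have "(\<lambda>x. \<phi> x * \<psi> x) = (\<lambda>x. \<Sum>\<alpha>\<in>mono_set D1. \<Sum>\<beta>\<in>mono_set D2.
          (c \<alpha> * c' \<beta>) * monomial_val (\<lambda>k. \<alpha> k + \<beta> k) x)"
    by (simp add: c mpoly_fun_def sum_distrib_left sum_distrib_right monomial_val_add mult_ac)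
  moreover have "polyfun (D1 + D2) (\<lambda>x. \<Sum>\<alpha>\<in>mono_set D1. \<Sum>\<beta>\<in>mono_set D2.
          (c \<alpha> * c' \<beta>) * monomial_val (\<lambda>k. \<alpha> k + \<beta> k) x)"
    by (intro polyfun_sum polyfun_cmult polyfun_monomial mono_set_add finite_mono_set)
  ultimately show ?thesis by simp
qed

lemma polyfun_prod:
  "finite I \<Longrightarrow> (\<And>i. i \<in> I \<Longrightarrow> polyfun (D i) (\<phi> i)) \<Longrightarrow>
     polyfun (\<Sum>i\<in>I. D i) (\<lambda>x. \<Prod>i\<in>I. \<phi> i x)"
  by (induction I rule: finite_induct) (simp_all add: polyfun_const polyfun_mult)

lemma polyfun_power: "polyfun D \<phi> \<Longrightarrow> polyfun (n * D) (\<lambda>x. \<phi> x ^ n)"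
  by (induction n) (simp_all add: polyfun_const polyfun_mult)

lemma polyfun_peval: "is_mpoly c \<Longrightarrow> mdeg_le c D \<Longrightarrow> polyfun D (peval c)"
  by (simp add: peval_eq_mpoly_fun)

lemma polyfun_peval_exists: "is_mpoly c \<Longrightarrow> \<exists>D. polyfun D (peval c)"
  using mdeg_le_exists polyfun_peval by blast

lemma polyfun_uniform_degree:
  "finite I \<Longrightarrow> (\<And>i. i \<in> I \<Longrightarrow> \<exists>D. polyfun D (\<phi> i)) \<Longrightarrow> \<exists>D. \<forall>i\<in>I. polyfun D (\<phi> i)"
proof (induction I rule: finite_induct)
  case (insert j I)
  then obtain D D' where "\<forall>i\<in>I. polyfun D (\<phi> i)" "polyfun D' (\<phi> j)" by blast
  then show ?case
    using polyfun_mono[of D _ "max D D'"] polyfun_mono[of D' _ "max D D'"] by (intro exI[of _ "max D D'"]) auto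
qed simp

lemma polyfun_comp_affine:
  fixes a :: "real^'n::finite"
  assumes "polyfun D \<phi>"
  shows "polyfun D (\<lambda>x. \<phi> (a + s *\<^sub>R (x - a)))"
proof -
  obtain c where c: "\<phi> = mpoly_fun D c" using assms by (auto simp: polyfun_def)
  have coord: "polyfun 1 (\<lambda>x. a $ j + s * (x $ j - a $ j))" for j
    by (intro polyfun_add polyfun_const polyfun_cmult polyfun_diff polyfun_coord) auto
  have "polyfun D (\<lambda>x. monomial_val \<alpha> (a + s *\<^sub>R (x - a)))" if "\<alpha> \<in> mono_set D" for \<alpha>
  proof -
    have "polyfun (\<Sum>j\<in>UNIV. \<alpha> j * 1) (\<lambda>x. \<Prod>j\<in>UNIV. (a $ j + s * (x $ j - a $ j)) ^ \<alpha> j)"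
      by (intro polyfun_prod polyfun_power coord) auto
    then have "polyfun (sum \<alpha> UNIV) (\<lambda>x. monomial_val \<alpha> (a + s *\<^sub>R (x - a)))"
      by (simp add: monomial_val_def)
    then show ?thesis by (rule polyfun_mono) (use that in \<open>simp add: mono_set_def\<close>)
  qed
  then show ?thesis
    unfolding c mpoly_fun_def by (intro polyfun_sum polyfun_cmult finite_mono_set)
qed

lemma mdeg_le_if_polyfun_peval:
  assumes "is_mpoly c" "polyfun D (peval c)"
  shows "mdeg_le c D"
proof -
  obtain D' where D': "mdeg_le c D'" using mdeg_le_exists[OF assms(1)] by blast
  obtain c' where c': "peval c = mpoly_fun D c'" using assms(2) by (auto simp: polyfun_def)
  let ?M = "max D D'"
  have "mdeg_le c ?M" using D' by (auto simp: mdeg_le_def)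
  then have "mpoly_fun ?M c = peval c" by (simp add: peval_eq_mpoly_fun[OF assms(1)])
  also have "\<dots> = mpoly_fun ?M (\<lambda>\<alpha>. if \<alpha> \<in> mono_set D then c' \<alpha> else 0)"
    unfolding c' mpoly_fun_def
    by (intro ext sum.mono_neutral_cong_left finite_mono_set mono_set_mono) auto
  finally have eq: "mpoly_fun ?M c = mpoly_fun ?M (\<lambda>\<alpha>. if \<alpha> \<in> mono_set D then c' \<alpha> else 0)" .
  show ?thesis unfolding mdeg_le_def
  proof (intro allI impI)
    fix \<alpha> assume "c \<alpha> \<noteq> 0"
    with D' have "\<alpha> \<in> mono_set ?M" by (auto simp: mdeg_le_def mono_set_def)
    with mpoly_fun_coeffs_unique[OF eq this] \<open>c \<alpha> \<noteq> 0\<close> have "\<alpha> \<in> mono_set D"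
      by (auto split: if_splits)
    then show "sum \<alpha> UNIV \<le> D" by (simp add: mono_set_def)
  qed
qed

lemma riesz_add:
  assumes "polyfun D \<phi>" "polyfun D \<psi>"
  shows "riesz D y (\<lambda>x. \<phi> x + \<psi> x) = riesz D y \<phi> + riesz D y \<psi>"
proof -
  obtain c c' where c: "\<phi> = mpoly_fun D c" "\<psi> = mpoly_fun D c'"
    using assms by (auto simp: polyfun_def)
  show ?thesis
    unfolding c mpoly_fun_add riesz_mpoly_fun by (simp add: lin_fun_def sum.distrib algebra_simps)
qed

lemma riesz_cmult:
  assumes "polyfun D \<phi>"
  shows "riesz D y (\<lambda>x. k * \<phi> x) = k * riesz D y \<phi>"
proof -
  obtain c where c: "\<phi> = mpoly_fun D c" using assms by (auto simp: polyfun_def)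
  show ?thesis
    unfolding c mpoly_fun_cmult riesz_mpoly_fun by (simp add: lin_fun_def sum_distrib_left algebra_simps)
qed

lemma riesz_diff:
  assumes "polyfun D \<phi>" "polyfun D \<psi>"
  shows "riesz D y (\<lambda>x. \<phi> x - \<psi> x) = riesz D y \<phi> - riesz D y \<psi>"
  using riesz_add[OF assms(1) polyfun_cmult[OF assms(2), of "-1"], of y]
    riesz_cmult[OF assms(2), of y "-1"]
  by simp

lemma riesz_monomial:
  assumes "\<beta> \<in> mono_set D"
  shows "riesz D y (monomial_val \<beta>) = y \<beta>"
  using riesz_mpoly_fun[of D y "\<lambda>\<alpha>. if \<alpha> = \<beta> then 1 else 0"]
  by (simp add: mpoly_fun_delta[OF assms] lin_fun_delta[OF assms])

lemma riesz_const: "riesz D y (\<lambda>x. k) = k * y (\<lambda>_. 0)"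
  using riesz_cmult[OF polyfun_monomial[OF zero_in_mono_set], of D y k]
  by (simp add: riesz_monomial)

lemma riesz_sum:
  "finite I \<Longrightarrow> (\<And>i. i \<in> I \<Longrightarrow> polyfun D (\<phi> i)) \<Longrightarrow>
     riesz D y (\<lambda>x. \<Sum>i\<in>I. \<phi> i x) = (\<Sum>i\<in>I. riesz D y (\<phi> i))"
proof (induction I rule: finite_induct)
  case empty
  then show ?case using riesz_const[of D y 0] by simp
next
  case (insert i I)
  then show ?case by (simp add: riesz_add polyfun_sum)
qed

lemma riesz_coord: "1 \<le> D \<Longrightarrow> riesz D y (\<lambda>x. x $ k) = y (unit_idx k)"
  using riesz_monomial[OF unit_idx_in_mono_set] by (simp add: monomial_val_unit_idx[abs_def])

lemma riesz_peval: "is_mpoly c \<Longrightarrow> mdeg_le c D \<Longrightarrow> riesz D y (peval c) = lin_fun D c y"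
  by (simp add: peval_eq_mpoly_fun riesz_mpoly_fun)

lemma riesz_square_expansion:
  fixes e :: "'i \<Rightarrow> ('n::finite \<Rightarrow> nat)"
  assumes "finite B" and e: "\<And>\<beta> \<gamma>. \<beta> \<in> B \<Longrightarrow> \<gamma> \<in> B \<Longrightarrow> (\<lambda>k. e \<beta> k + e \<gamma> k) \<in> mono_set D"
  shows "riesz D y (\<lambda>x. (\<Sum>\<beta>\<in>B. c \<beta> * monomial_val (e \<beta>) x)^2) =
    (\<Sum>\<beta>\<in>B. \<Sum>\<gamma>\<in>B. c \<beta> * y (\<lambda>k. e \<beta> k + e \<gamma> k) * c \<gamma>)"
proof -
  let ?m = "\<lambda>\<beta> \<gamma> x. (c \<beta> * c \<gamma>) * monomial_val (\<lambda>k. e \<beta> k + e \<gamma> k) x"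
  have pf: "polyfun D (?m \<beta> \<gamma>)" if "\<beta> \<in> B" "\<gamma> \<in> B" for \<beta> \<gamma>
    by (intro polyfun_cmult polyfun_monomial e that)
  have sq: "(\<lambda>x. (\<Sum>\<beta>\<in>B. c \<beta> * monomial_val (e \<beta>) x)^2) = (\<lambda>x. \<Sum>\<beta>\<in>B. \<Sum>\<gamma>\<in>B. ?m \<beta> \<gamma> x)"
    by (simp add: power2_eq_square sum_distrib_left sum_distrib_right monomial_val_add mult_ac)
  have "riesz D y (\<lambda>x. \<Sum>\<beta>\<in>B. \<Sum>\<gamma>\<in>B. ?m \<beta> \<gamma> x) = (\<Sum>\<beta>\<in>B. riesz D y (\<lambda>x. \<Sum>\<gamma>\<in>B. ?m \<beta> \<gamma> x))"
    using assms(1) pf by (intro riesz_sum polyfun_sum) auto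
  also have "\<dots> = (\<Sum>\<beta>\<in>B. \<Sum>\<gamma>\<in>B. riesz D y (?m \<beta> \<gamma>))"
    using assms(1) pf by (intro sum.cong refl riesz_sum) auto
  also have "\<dots> = (\<Sum>\<beta>\<in>B. \<Sum>\<gamma>\<in>B. c \<beta> * y (\<lambda>k. e \<beta> k + e \<gamma> k) * c \<gamma>)"
  proof (intro sum.cong refl)
    fix \<beta> \<gamma> assume "\<beta> \<in> B" "\<gamma> \<in> B"
    then have m: "(\<lambda>k. e \<beta> k + e \<gamma> k) \<in> mono_set D" by (rule e)
    have "riesz D y (?m \<beta> \<gamma>) = (c \<beta> * c \<gamma>) * riesz D y (monomial_val (\<lambda>k. e \<beta> k + e \<gamma> k))"
      by (rule riesz_cmult[OF polyfun_monomial[OF m]])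
    then show "riesz D y (?m \<beta> \<gamma>) = c \<beta> * y (\<lambda>k. e \<beta> k + e \<gamma> k) * c \<gamma>"
      by (simp add: riesz_monomial[OF m])
  qed
  finally show ?thesis unfolding sq .
qed

section \<open>Nonnegative univariate polynomials and the univariate Jensen inequality\<close>

lemma map_poly_of_real_add:
  "map_poly (of_real :: real \<Rightarrow> complex) (p + q) = map_poly of_real p + map_poly of_real q"
  by (intro poly_eqI) (simp add: coeff_map_poly)

lemma map_poly_of_real_mult:
  "map_poly (of_real :: real \<Rightarrow> complex) (p * q) = map_poly of_real p * map_poly of_real q"
proof (induction p)
  case (pCons a p)
  have "map_poly of_real (pCons a p * q) =
      map_poly (of_real :: real \<Rightarrow> complex) (smult a q + pCons 0 (p * q))"
    by simp
  also have "\<dots> = map_poly of_real (pCons a p) * map_poly of_real q"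
    by (simp add: map_poly_of_real_add map_poly_smult map_poly_pCons pCons.IH)
  finally show ?case .
qed simp

lemma poly_map_poly_of_real: "poly (map_poly of_real p) (of_real t :: complex) = of_real (poly p t)"
  by (induction p) (auto simp: map_poly_pCons)

lemma isCont_nonneg_if_nonneg_off_point:
  fixes f :: "real \<Rightarrow> real"
  assumes "isCont f b" "\<And>t. t \<noteq> b \<Longrightarrow> f t \<ge> 0"
  shows "f b \<ge> 0"
proof (rule tendsto_lowerbound)
  show "(f \<longlongrightarrow> f b) (at b)" using assms(1) by (simp add: isCont_def)
  show "\<forall>\<^sub>F t in at b. 0 \<le> f t" using assms(2) by (auto simp: eventually_at_filter)
qed simp

lemma nonneg_poly_root_square_dvd:
  fixes q :: "real poly"
  assumes nonneg: "\<And>t. poly q t \<ge> 0" and root: "poly q a = 0"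
  shows "[:-a, 1:]^2 dvd q"
proof -
  from root obtain q1 where q1: "q = [:-a, 1:] * q1" by (auto simp: poly_eq_0_iff_dvd)
  have "poly (pderiv q) a = 0"
  proof (rule DERIV_local_min[of "poly q"])
    show "DERIV (poly q) a :> poly (pderiv q) a" by (rule poly_DERIV)
    show "\<forall>t. \<bar>a - t\<bar> < 1 \<longrightarrow> poly q a \<le> poly q t" using nonneg root by simp
  qed simp
  moreover have "poly (pderiv q) a = poly q1 a" unfolding q1 pderiv_mult by (simp add: pderiv_pCons)
  ultimately obtain q2 where "q1 = [:-a, 1:] * q2" by (auto simp: poly_eq_0_iff_dvd)
  with q1 have "q = [:-a, 1:]^2 * q2" by (simp only: power2_eq_square mult.assoc)
  then show ?thesis by simp
qed

lemma nonreal_root_quadratic_dvd: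
  fixes q :: "real poly"
  assumes root: "poly (map_poly of_real q) z = 0" and nonreal: "Im z \<noteq> 0"
  shows "[:-Re z, 1:]^2 + [:Im z:]^2 dvd q"
proof -
  define P where "P = [:Re z ^ 2 + Im z ^ 2, -2 * Re z, 1:]"
  have P: "[:-Re z, 1:]^2 + [:Im z:]^2 = P"
    by (simp add: P_def power2_eq_square algebra_simps)
  have P0: "P \<noteq> 0" and degP: "degree P = 2" by (simp_all add: P_def)
  have Pz: "poly (map_poly of_real P) z = 0"
    by (simp add: P_def map_poly_pCons complex_eq_iff power2_eq_square algebra_simps)
  define r where "r = q mod P"
  have "q = q div P * P + r" by (simp add: r_def)
  then have rz: "poly (map_poly of_real r) z = 0"
    using root Pz by (metis map_poly_of_real_add map_poly_of_real_mult poly_add poly_mult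
        add_0 mult_zero_right)
  have "r = 0"
  proof (rule ccontr)
    assume "r \<noteq> 0"
    then have "degree r < 2" using degree_mod_less[OF P0, of q] degP by (simp add: r_def)
    then have r: "r = [:coeff r 0, coeff r 1:]"
      by (intro poly_eqI) (auto simp: coeff_pCons coeff_eq_0 split: nat.splits)
    have "of_real (coeff r 0) + z * of_real (coeff r 1) = 0"
      using rz by (subst (asm) r) (simp add: map_poly_pCons)
    then have "coeff r 1 = 0" "coeff r 0 = 0"
      using nonreal by (auto simp: complex_eq_iff)
    with r \<open>r \<noteq> 0\<close> show False by simp
  qed
  then show ?thesis unfolding P by (simp add: r_def mod_eq_0_iff_dvd)
qed

lemma nonneg_poly_quadratic_factor:
  fixes q :: "real poly"
  assumes nonneg: "\<And>t. poly q t \<ge> 0" and deg: "degree q \<noteq> 0"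
  obtains b c s where "q = ([:-b, 1:]^2 + [:c:]^2) * s" "\<And>t. poly s t \<ge> 0"
    "degree q = degree s + 2"
proof -
  have "degree (map_poly complex_of_real q) = degree q"
    by (rule map_poly_degree_eq) (use deg in auto)
  then have "\<not> (\<exists>a l. a \<noteq> 0 \<and> l = 0 \<and> map_poly complex_of_real q = pCons a l)"
    using deg by auto
  then obtain z :: complex where z: "poly (map_poly of_real q) z = 0"
    using fundamental_theorem_of_algebra_alt by blast
  define P where "P = [:-Re z, 1:]^2 + [:Im z:]^2"
  have "P dvd q"
  proof (cases "Im z = 0")
    case True
    then have "z = of_real (Re z)" by (simp add: complex_eq_iff)
    with z have "poly q (Re z) = 0" by (metis of_real_eq_0_iff poly_map_poly_of_real)
    then show ?thesis using nonneg_poly_root_square_dvd[OF nonneg] True by (simp add: P_def)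
  next
    case False
    then show ?thesis using nonreal_root_quadratic_dvd[OF z] by (simp add: P_def)
  qed
  then obtain s where q: "q = P * s" by (auto elim: dvdE)
  have polyP: "poly P t = (t - Re z)^2 + (Im z)^2" for t
    by (simp add: P_def power2_eq_square algebra_simps)
  have "poly s t \<ge> 0" if "t \<noteq> Re z" for t
  proof -
    have "poly P t > 0" using that by (simp add: polyP add_pos_nonneg)
    moreover have "poly P t * poly s t \<ge> 0" using nonneg[of t] by (simp add: q)
    ultimately show ?thesis by (simp add: zero_le_mult_iff)
  qed
  then have s: "poly s t \<ge> 0" for t
    by (cases "t = Re z") (auto intro: isCont_nonneg_if_nonneg_off_point)
  have "P \<noteq> 0" "s \<noteq> 0" "degree P = 2" using deg by (auto simp: q P_def power2_eq_square)
  then have "degree q = degree s + 2" by (simp add: q degree_mult_eq)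
  with q s show ?thesis unfolding P_def by (rule that)
qed

lemma nonneg_poly_sum_two_squares:
  fixes q :: "real poly"
  assumes "\<And>t. poly q t \<ge> 0"
  shows "\<exists>A B. q = A^2 + B^2 \<and> 2 * degree A \<le> degree q \<and> 2 * degree B \<le> degree q"
  using assms
proof (induction "degree q" arbitrary: q rule: less_induct)
  case (less q)
  show ?case
  proof (cases "degree q = 0")
    case True
    then obtain c where q: "q = [:c:]" by (metis degree_eq_zeroE)
    with less.prems have "c \<ge> 0" by (metis poly_const_conv)
    then have "q = [:sqrt c:]^2 + 0^2" by (simp add: q power2_eq_square)
    then show ?thesis by (intro exI[of _ "[:sqrt c:]"] exI[of _ 0]) simp
  next
    case False
    then obtain b c s where q: "q = ([:-b, 1:]^2 + [:c:]^2) * s" and s: "\<And>t. poly s t \<ge> 0"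
      and dq: "degree q = degree s + 2"
      using nonneg_poly_quadratic_factor less.prems by metis
    then obtain A B where AB: "s = A^2 + B^2" "2 * degree A \<le> degree s" "2 * degree B \<le> degree s"
      using less.hyps[of s] by auto
    let ?P = "[:-b, 1:]" and ?Q = "[:c:]"
    have P: "degree (?P * X) \<le> degree X + 1" and Q: "degree (?Q * X) \<le> degree X" for X
      using degree_mult_le[of ?P X] degree_mult_le[of ?Q X] by simp_all
    have Brahmagupta_Fibonacci: "(X^2 + Y^2) * (A^2 + B^2) = (X * A - Y * B)^2 + (X * B + Y * A)^2"
      for X Y :: "real poly"
      by (simp add: power2_eq_square algebra_simps)
    have "q = (?P * A - ?Q * B)^2 + (?P * B + ?Q * A)^2"
      unfolding q AB(1) by (rule Brahmagupta_Fibonacci)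
    moreover have "2 * degree (?P * A - ?Q * B) \<le> degree q"
      using degree_diff_le_max[of "?P * A" "?Q * B"] P[of A] Q[of B] AB dq by linarith
    moreover have "2 * degree (?P * B + ?Q * A) \<le> degree q"
      using degree_add_le_max[of "?P * B" "?Q * A"] P[of B] Q[of A] AB dq by linarith
    ultimately show ?thesis by blast
  qed
qed

lemma poly_eq_sum_pow_idx:
  fixes h :: "real poly"
  assumes "degree h \<le> N"
  shows "poly h (x $ j) = (\<Sum>i\<le>N. coeff h i * monomial_val (pow_idx j i) x)"
proof -
  have "poly h (x $ j) = (\<Sum>i\<le>degree h. coeff h i * (x $ j) ^ i)" by (rule poly_altdef)
  also have "\<dots> = (\<Sum>i\<le>N. coeff h i * (x $ j) ^ i)"
    by (rule sum.mono_neutral_left) (use assms in \<open>auto simp: coeff_eq_0\<close>)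
  finally show ?thesis by (simp add: monomial_val_pow_idx)
qed

lemma polyfun_univariate:
  fixes h :: "real poly"
  assumes "degree h \<le> D"
  shows "polyfun D (\<lambda>x. poly h (x $ j))"
  unfolding poly_eq_sum_pow_idx[OF assms]
  by (intro polyfun_sum polyfun_cmult polyfun_monomial pow_idx_in_mono_set) auto

lemma univ_moment_matrix_eq:
  assumes "a + b \<le> D"
  shows "univ_moment_matrix D y j a b = y (pow_idx j (a + b))"
proof -
  have "univ_moment_matrix D y j a b
      = (\<Sum>\<alpha>\<in>mono_set D. if \<alpha> = pow_idx j (a + b) then y (pow_idx j (a + b)) else 0)"
    unfolding univ_moment_matrix_def by (rule sum.cong) auto
  also have "\<dots> = y (pow_idx j (a + b))"
    by (rule trans[OF sum.delta[OF finite_mono_set]]) (use pow_idx_in_mono_set[OF assms, of j] in simp)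
  finally show ?thesis .
qed

lemma riesz_univariate_square_nonneg:
  fixes A :: "real poly"
  assumes "degree A \<le> dj" "2 * dj \<le> D" and psd: "psd_on {0..dj} (univ_moment_matrix D y j)"
  shows "riesz D y (\<lambda>x. (poly A (x $ j))^2) \<ge> 0"
proof -
  have "(\<lambda>x. (poly A (x $ j))^2) = (\<lambda>x. (\<Sum>i\<in>{0..dj}. coeff A i * monomial_val (pow_idx j i) x)^2)"
    by (intro ext) (simp only: poly_eq_sum_pow_idx[OF assms(1)] atLeast0AtMost)
  then have "riesz D y (\<lambda>x. (poly A (x $ j))^2)
      = (\<Sum>a\<in>{0..dj}. \<Sum>b\<in>{0..dj}. coeff A a * y (pow_idx j (a + b)) * coeff A b)"
    using riesz_square_expansion[of "{0..dj}" "pow_idx j" D y "coeff A"] assms(2)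
    by (simp add: pow_idx_add pow_idx_in_mono_set)
  also have "\<dots> = (\<Sum>a\<in>{0..dj}. \<Sum>b\<in>{0..dj}. coeff A a * univ_moment_matrix D y j a b * coeff A b)"
    using assms(2) by (intro sum.cong refl) (simp add: univ_moment_matrix_eq)
  also have "\<dots> \<ge> 0" using psd unfolding psd_on_def by blast
  finally show ?thesis .
qed

lemma degree_minus_tangent_le:
  fixes u :: "real poly"
  shows "degree (u - [:poly u a:] - smult (poly (pderiv u) a) [:-a, 1:]) \<le> degree u"
proof -
  have "degree (smult (poly (pderiv u) a) [:-a, 1:]) \<le> degree u"
  proof (cases "degree u = 0")
    case True
    then show ?thesis by (simp add: pderiv_eq_0_iff[symmetric])
  next
    case False
    then show ?thesis using degree_smult_le[of "poly (pderiv u) a" "[:-a, 1:]"] by simp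
  qed
  then show ?thesis
    using degree_diff_le_max[of u "[:poly u a:]"]
      degree_diff_le_max[of "u - [:poly u a:]" "smult (poly (pderiv u) a) [:-a, 1:]"] by simp
qed

lemma riesz_univariate_jensen:
  fixes u :: "real poly"
  assumes conv: "convex_on UNIV (poly u)" and deg: "degree u \<le> 2 * dj"
    and D: "2 * dj \<le> D" "1 \<le> D"
    and psd: "psd_on {0..dj} (univ_moment_matrix D y j)" and y0: "y (\<lambda>_. 0) = 1"
  shows "riesz D y (\<lambda>x. poly u (x $ j)) \<ge> poly u (y (unit_idx j))"
proof -
  define a where "a = y (unit_idx j)"
  define u1 where "u1 = poly (pderiv u) a"
  define q where "q = u - [:poly u a:] - smult u1 [:-a, 1:]"
  have poly_q: "poly q t = poly u t - poly u a - u1 * (t - a)" for t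
    by (simp add: q_def algebra_simps)
  have "poly q t \<ge> 0" for t
    using convex_on_imp_above_tangent[OF conv, of a t] by (simp add: poly_q u1_def poly_DERIV)
  then obtain A B where AB: "q = A^2 + B^2" "2 * degree A \<le> degree q" "2 * degree B \<le> degree q"
    using nonneg_poly_sum_two_squares by blast
  have "degree q \<le> degree u" unfolding q_def u1_def by (rule degree_minus_tangent_le)
  with AB deg have dA: "degree A \<le> dj" and dB: "degree B \<le> dj" by auto
  have square: "polyfun D (\<lambda>x. (poly C (x $ j))^2)" if "degree C \<le> dj" for C
  proof -
    have "polyfun (dj + dj) (\<lambda>x. poly C (x $ j) * poly C (x $ j))"
      by (intro polyfun_mult polyfun_univariate that)
    then have "polyfun D (\<lambda>x. poly C (x $ j) * poly C (x $ j))" by (rule polyfun_mono) (use D in simp)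
    then show ?thesis by (simp add: power2_eq_square)
  qed
  have tangent: "polyfun D (\<lambda>x. poly u a + u1 * (x $ j - a))"
    using D by (intro polyfun_add polyfun_const polyfun_cmult polyfun_diff polyfun_coord) auto
  have "(\<lambda>x. poly u (x $ j)) =
      (\<lambda>x. ((poly A (x $ j))^2 + (poly B (x $ j))^2) + (poly u a + u1 * (x $ j - a)))"
    using poly_q by (auto simp: AB(1) fun_eq_iff)
  then have "riesz D y (\<lambda>x. poly u (x $ j)) = riesz D y (\<lambda>x. (poly A (x $ j))^2)
      + riesz D y (\<lambda>x. (poly B (x $ j))^2) + riesz D y (\<lambda>x. poly u a + u1 * (x $ j - a))"
    by (simp add: riesz_add polyfun_add square dA dB tangent)
  also have "riesz D y (\<lambda>x. poly u a + u1 * (x $ j - a)) = poly u a"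
    using D by (simp add: riesz_add riesz_cmult riesz_diff riesz_const riesz_coord y0 a_def
        polyfun_cmult polyfun_diff polyfun_coord polyfun_const)
  finally show ?thesis
    using riesz_univariate_square_nonneg[OF dA D(1) psd] riesz_univariate_square_nonneg[OF dB D(1) psd]
    by (simp add: a_def)
qed

section \<open>The Jensen inequality for SOS-convex polynomials\<close>

lemma moment_matrix_eq:
  assumes "\<beta> \<in> mono_set r" "\<gamma> \<in> mono_set r" "2 * r \<le> D"
  shows "moment_matrix D y \<beta> \<gamma> = y (\<lambda>k. \<beta> k + \<gamma> k)"
proof -
  have m: "(\<lambda>k. \<beta> k + \<gamma> k) \<in> mono_set D"
    using mono_set_add[OF assms(1,2)] mono_set_mono[of "r + r" D] assms(3) by auto
  have "moment_matrix D y \<beta> \<gamma> =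
      (\<Sum>\<alpha>\<in>mono_set D. if \<alpha> = (\<lambda>k. \<beta> k + \<gamma> k) then y (\<lambda>k. \<beta> k + \<gamma> k) else 0)"
    unfolding moment_matrix_def by (rule sum.cong) auto
  also have "\<dots> = y (\<lambda>k. \<beta> k + \<gamma> k)"
    by (rule trans[OF sum.delta[OF finite_mono_set]]) (use m in simp)
  finally show ?thesis .
qed

lemma riesz_square_nonneg:
  assumes "polyfun r G" "2 * r \<le> D" and psd: "psd_on (mono_set r) (moment_matrix D y)"
  shows "riesz D y (\<lambda>x. (G x)^2) \<ge> 0"
proof -
  obtain c where c: "G = mpoly_fun r c" using assms(1) by (auto simp: polyfun_def)
  have "(\<lambda>k. \<beta> k + \<gamma> k) \<in> mono_set D" if "\<beta> \<in> mono_set r" "\<gamma> \<in> mono_set r" for \<beta> \<gamma>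
    using mono_set_add[OF that] mono_set_mono[of "r + r" D] assms(2) by auto
  then have "riesz D y (\<lambda>x. (G x)^2) =
      (\<Sum>\<beta>\<in>mono_set r. \<Sum>\<gamma>\<in>mono_set r. c \<beta> * y (\<lambda>k. \<beta> k + \<gamma> k) * c \<gamma>)"
    unfolding c mpoly_fun_def
    by (intro riesz_square_expansion[of "mono_set r" "\<lambda>\<beta>. \<beta>", simplified] finite_mono_set)
  also have "\<dots> = (\<Sum>\<beta>\<in>mono_set r. \<Sum>\<gamma>\<in>mono_set r. c \<beta> * moment_matrix D y \<beta> \<gamma> * c \<gamma>)"
    using assms(2) by (intro sum.cong refl) (simp add: moment_matrix_eq)
  also have "\<dots> \<ge> 0" using psd unfolding psd_on_def by blast
  finally show ?thesis .
qed

lemma riesz_sum_squares_nonneg: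
  assumes "finite T" "\<And>t. t \<in> T \<Longrightarrow> polyfun r (G t)" "2 * r \<le> D"
    and psd: "psd_on (mono_set r) (moment_matrix D y)"
  shows "riesz D y (\<lambda>x. \<Sum>t\<in>T. (G t x)^2) \<ge> 0"
proof -
  have "polyfun D (\<lambda>x. (G t x)^2)" if "t \<in> T" for t
  proof -
    have "polyfun (r + r) (\<lambda>x. G t x * G t x)" by (intro polyfun_mult assms(2) that)
    then have "polyfun D (\<lambda>x. G t x * G t x)" by (rule polyfun_mono) (use assms(3) in simp)
    then show ?thesis by (simp add: power2_eq_square)
  qed
  then have "riesz D y (\<lambda>x. \<Sum>t\<in>T. (G t x)^2) = (\<Sum>t\<in>T. riesz D y (\<lambda>x. (G t x)^2))"
    using assms(1) by (intro riesz_sum) auto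
  also have "\<dots> \<ge> 0"
    using assms(2) riesz_square_nonneg[OF _ assms(3) psd] by (auto intro: sum_nonneg)
  finally show ?thesis .
qed

lemma degree_le_of_sum_squares:
  fixes A :: "'t \<Rightarrow> real poly"
  assumes "finite T" "t0 \<in> T"
  shows "2 * degree (A t0) \<le> degree (\<Sum>t\<in>T. (A t)^2)"
proof -
  define m where "m = Max ((\<lambda>t. degree (A t)) ` T)"
  have le_m: "degree (A t) \<le> m" if "t \<in> T" for t
    unfolding m_def using assms(1) that by (intro Max_ge) auto
  have "2 * m \<le> degree (\<Sum>t\<in>T. (A t)^2)"
  proof (cases "m = 0")
    case False
    have "m \<in> (\<lambda>t. degree (A t)) ` T" unfolding m_def using assms by (intro Max_in) auto
    then obtain t1 where t1: "t1 \<in> T" "degree (A t1) = m" by auto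
    with False have A1: "A t1 \<noteq> 0" by auto
    have top: "coeff ((A t)^2) (2 * m) = (if degree (A t) = m then (lead_coeff (A t))^2 else 0)"
      if "t \<in> T" for t
    proof (cases "degree (A t) = m")
      case True
      then show ?thesis using coeff_mult_degree_sum[of "A t" "A t"] by (simp add: power2_eq_square mult_2)
    next
      case False
      with le_m[OF that] have "degree ((A t)^2) < 2 * m"
        using degree_mult_le[of "A t" "A t"] by (simp add: power2_eq_square)
      then show ?thesis using False by (simp add: coeff_eq_0)
    qed
    \<comment> \<open>the top coefficients are squares, so they cannot cancel\<close>
    have "coeff (\<Sum>t\<in>T. (A t)^2) (2 * m) = (\<Sum>t\<in>T. if degree (A t) = m then (lead_coeff (A t))^2 else 0)"
      by (simp add: coeff_sum top)
    also have "\<dots> \<ge> (lead_coeff (A t1))^2"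
      using member_le_sum[of t1 T "\<lambda>t. if degree (A t) = m then (lead_coeff (A t))^2 else 0"]
        t1 assms(1) by simp
    finally have "coeff (\<Sum>t\<in>T. (A t)^2) (2 * m) \<ge> (lead_coeff (A t1))^2" .
    moreover have "(lead_coeff (A t1))^2 > 0" using A1 by simp
    ultimately have "coeff (\<Sum>t\<in>T. (A t)^2) (2 * m) \<noteq> 0" by linarith
    then show ?thesis by (rule le_degree)
  qed simp
  then show ?thesis using le_m[OF assms(2)] by linarith
qed

definition ray_poly :: "nat \<Rightarrow> (('n::finite \<Rightarrow> nat) \<Rightarrow> real) \<Rightarrow> real^'n \<Rightarrow> real poly" where
  "ray_poly D c x = (\<Sum>\<alpha>\<in>mono_set D. monom (c \<alpha> * monomial_val \<alpha> x) (sum \<alpha> UNIV))"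

lemma poly_ray_poly: "poly (ray_poly D c x) l = mpoly_fun D c (l *\<^sub>R x)"
  by (simp add: ray_poly_def mpoly_fun_def poly_sum poly_monom monomial_val_scaleR mult_ac)

lemma degree_ray_poly: "degree (ray_poly D c x) \<le> D"
  unfolding ray_poly_def
  by (rule degree_sum_le[OF finite_mono_set])
     (auto intro: order_trans[OF degree_monom_le] simp: mono_set_def)

lemma coeff_ray_poly:
  "coeff (ray_poly D c x) e = mpoly_fun D (\<lambda>\<alpha>. if sum \<alpha> UNIV = e then c \<alpha> else 0) x"
  unfolding ray_poly_def mpoly_fun_def coeff_sum coeff_monom by (intro sum.cong) auto

lemma polyfun_if_degree_ray_poly_le:
  assumes deg: "\<And>x. degree (ray_poly E c x) \<le> r"
  shows "polyfun r (mpoly_fun E c)"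
proof -
  have vanish: "c \<alpha> = 0" if "\<alpha> \<in> mono_set E" "sum \<alpha> UNIV > r" for \<alpha>
  proof -
    let ?e = "sum \<alpha> UNIV"
    have "coeff (ray_poly E c x) ?e = 0" for x
      using deg[of x] that(2) by (intro coeff_eq_0) linarith
    then have "mpoly_fun E (\<lambda>\<beta>. if sum \<beta> UNIV = ?e then c \<beta> else 0) = mpoly_fun E (\<lambda>_. 0)"
      by (simp add: fun_eq_iff coeff_ray_poly) (simp add: mpoly_fun_def)
    from mpoly_fun_coeffs_unique[OF this that(1)] show ?thesis by simp
  qed
  show ?thesis
  proof (cases "E \<le> r")
    case True
    then show ?thesis using polyfun_mono[of E "mpoly_fun E c" r] by simp
  next
    case False
    have "mpoly_fun E c = mpoly_fun r c"
      unfolding mpoly_fun_def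
      by (intro ext sum.mono_neutral_right finite_mono_set)
         (use False vanish in \<open>auto simp: mono_set_def\<close>)
    then show ?thesis by simp
  qed
qed

lemma polyfun_half_degree_if_sum_squares:
  fixes G :: "'t \<Rightarrow> real^'n::finite \<Rightarrow> real"
  assumes T: "finite T" "t0 \<in> T" and G: "\<And>t. t \<in> T \<Longrightarrow> \<exists>E. polyfun E (G t)"
    and sum_sq: "polyfun (2 * r) (\<lambda>x. \<Sum>t\<in>T. (G t x)^2)"
  shows "polyfun r (G t0)"
proof -
  obtain E where "\<forall>t\<in>T. polyfun E (G t)" using polyfun_uniform_degree[of T G] T(1) G by blast
  then obtain c where c: "\<And>t. t \<in> T \<Longrightarrow> G t = mpoly_fun E (c t)"
    unfolding polyfun_def by metis
  obtain cq where cq: "(\<lambda>x. \<Sum>t\<in>T. (G t x)^2) = mpoly_fun (2 * r) cq"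
    using sum_sq by (auto simp: polyfun_def)
  have "degree (ray_poly E (c t0) x) \<le> r" for x
  proof -
    have "poly (\<Sum>t\<in>T. (ray_poly E (c t) x)^2) = poly (ray_poly (2 * r) cq x)"
      using fun_cong[OF cq] by (simp add: fun_eq_iff poly_sum poly_ray_poly c[symmetric])
    then have "(\<Sum>t\<in>T. (ray_poly E (c t) x)^2) = ray_poly (2 * r) cq x"
      by (simp add: poly_eq_poly_eq_iff)
    then have "2 * degree (ray_poly E (c t0) x) \<le> degree (ray_poly (2 * r) cq x)"
      using degree_le_of_sum_squares[OF T, of "\<lambda>t. ray_poly E (c t) x"] by simp
    then show ?thesis using degree_ray_poly[of "2 * r" cq x] by linarith
  qed
  then show ?thesis
    unfolding c[OF T(2)] by (rule polyfun_if_degree_ray_poly_le)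
qed

definition lagrange_basis :: "nat \<Rightarrow> nat \<Rightarrow> real poly" where
  "lagrange_basis N i =
     smult (1 / (\<Prod>k\<in>{..N} - {i}. (real i - real k))) (\<Prod>k\<in>{..N} - {i}. [:- real k, 1:])"

lemma poly_lagrange_basis:
  assumes "m \<le> N"
  shows "poly (lagrange_basis N i) (real m) = (if m = i then 1 else 0)"
proof (cases "m = i")
  case True
  have "(\<Prod>k\<in>{..N} - {i}. (real i - real k)) \<noteq> 0" by (simp add: prod_zero_iff)
  then show ?thesis using True by (simp add: lagrange_basis_def poly_prod)
next
  case False
  have "(\<Prod>k\<in>{..N} - {i}. (real m - real k)) = 0"
    by (rule prod_zero) (use assms False in force)+
  then show ?thesis using False by (simp add: lagrange_basis_def poly_prod)
qed

lemma degree_lagrange_basis: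
  assumes "i \<le> N"
  shows "degree (lagrange_basis N i) \<le> N"
proof -
  have "degree (\<Prod>k\<in>{..N} - {i}. [:- real k, 1:]) \<le> (\<Sum>k\<in>{..N} - {i}. degree [:- real k, 1:])"
    using degree_prod_sum_le[of "{..N} - {i}" "\<lambda>k. [:- real k, 1:]"] by (simp add: comp_def)
  also have "\<dots> \<le> N" using assms by (simp add: card_Diff_singleton)
  finally show ?thesis
    unfolding lagrange_basis_def by (rule order_trans[OF degree_smult_le])
qed

lemma poly_lagrange_interpolation:
  fixes P :: "real poly"
  assumes "degree P \<le> N"
  shows "poly P s = (\<Sum>i\<le>N. poly (lagrange_basis N i) s * poly P (real i))"
proof -
  let ?I = "\<Sum>i\<le>N. smult (poly P (real i)) (lagrange_basis N i)"
  have card: "card (real ` {..N}) = Suc N" by (simp add: card_image)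
  have "degree ?I \<le> N"
    by (rule degree_sum_le) (auto intro: order_trans[OF degree_smult_le] degree_lagrange_basis)
  moreover have "poly P x = poly ?I x" if "x \<in> real ` {..N}" for x
    using that by (auto simp: poly_sum poly_lagrange_basis if_distrib[of "\<lambda>t. _ * t"] cong: if_cong)
  ultimately have "P = ?I"
    using assms card by (intro poly_eqI_degree[of "real ` {..N}"]) auto
  then have "poly P s = poly ?I s" by (rule arg_cong)
  also have "\<dots> = (\<Sum>i\<le>N. poly (lagrange_basis N i) s * poly P (real i))"
    by (simp add: poly_sum mult_ac)
  finally show ?thesis .
qed

lemma poly_pderiv_eqI:
  assumes "\<And>t. poly P t = f t" "(f has_real_derivative f') (at s)"
  shows "poly (pderiv P) s = f'"
proof -
  have "poly P = f" using assms(1) by auto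
  with poly_DERIV[of P s] assms(2) show ?thesis by (metis DERIV_unique)
qed

lemma poly_pderiv_lagrange_interpolation:
  fixes P :: "real poly"
  assumes "degree P \<le> N"
  shows "poly (pderiv P) s = (\<Sum>i\<le>N. poly (pderiv (lagrange_basis N i)) s * poly P (real i))"
  by (rule poly_pderiv_eqI[OF poly_lagrange_interpolation[OF assms]])
     (intro DERIV_sum DERIV_cmult_right poly_DERIV)

text \<open>By Lagrange interpolation at \<open>0, \<dots>, N\<close>, every evaluation of \<open>P X\<close> and of \<open>pderiv (P X)\<close> is
  a fixed combination of the evaluations at these nodes; this lets \<open>s\<close>-derivatives commute
  with the Riesz functional in \<open>X\<close>.\<close>
lemma polyfun_poly_family_pderiv:
  assumes deg: "\<And>X. degree (P X) \<le> N" and pf: "\<And>s. polyfun D (\<lambda>X. poly (P X) s)"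
  shows "polyfun D (\<lambda>X. poly (pderiv (P X)) s)"
proof -
  have "(\<lambda>X. poly (pderiv (P X)) s) =
      (\<lambda>X. \<Sum>i\<le>N. poly (pderiv (lagrange_basis N i)) s * poly (P X) (real i))"
    using poly_pderiv_lagrange_interpolation[OF deg] by auto
  then show ?thesis by (auto intro!: polyfun_sum polyfun_cmult pf)
qed

lemma has_real_derivative_riesz_poly_family:
  assumes deg: "\<And>X. degree (P X) \<le> N" and pf: "\<And>s. polyfun D (\<lambda>X. poly (P X) s)"
  shows "((\<lambda>s. riesz D y (\<lambda>X. poly (P X) s)) has_real_derivative
           riesz D y (\<lambda>X. poly (pderiv (P X)) s)) (at s)"
proof -
  define c where "c i = riesz D y (\<lambda>X. poly (P X) (real i))" for i
  have interp: "riesz D y (\<lambda>X. \<Sum>i\<le>N. w i * poly (P X) (real i)) = (\<Sum>i\<le>N. w i * c i)" for w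
    by (simp add: riesz_sum riesz_cmult polyfun_cmult pf c_def)
  have "(\<lambda>X. poly (P X) s) = (\<lambda>X. \<Sum>i\<le>N. poly (lagrange_basis N i) s * poly (P X) (real i))" for s
    using poly_lagrange_interpolation[OF deg] by blast
  then have "(\<lambda>s. riesz D y (\<lambda>X. poly (P X) s)) = (\<lambda>s. \<Sum>i\<le>N. poly (lagrange_basis N i) s * c i)"
    by (simp only: interp)
  moreover have "(\<lambda>X. poly (pderiv (P X)) s) =
      (\<lambda>X. \<Sum>i\<le>N. poly (pderiv (lagrange_basis N i)) s * poly (P X) (real i))"
    using poly_pderiv_lagrange_interpolation[OF deg] by blast
  then have "riesz D y (\<lambda>X. poly (pderiv (P X)) s) = (\<Sum>i\<le>N. poly (pderiv (lagrange_basis N i)) s * c i)"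
    by (simp only: interp)
  moreover have "((\<lambda>s. \<Sum>i\<le>N. poly (lagrange_basis N i) s * c i) has_real_derivative
      (\<Sum>i\<le>N. poly (pderiv (lagrange_basis N i)) s * c i)) (at s)"
    by (intro DERIV_sum DERIV_cmult_right poly_DERIV)
  ultimately show ?thesis by simp
qed

definition line_poly :: "'n::finite mpoly_coeffs \<Rightarrow> real^'n \<Rightarrow> real^'n \<Rightarrow> real poly" where
  "line_poly c a v = (\<Sum>\<alpha>\<in>{\<alpha>. c \<alpha> \<noteq> 0}. smult (c \<alpha>) (\<Prod>j\<in>UNIV. [:a $ j, v $ j:] ^ \<alpha> j))"

lemma poly_line_poly: "poly (line_poly c a v) s = peval c (a + s *\<^sub>R v)"
  by (simp add: line_poly_def poly_sum poly_prod peval_def monomial_val_def)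

lemma degree_line_poly:
  assumes "is_mpoly c" "mdeg_le c N"
  shows "degree (line_poly c a v) \<le> N"
  unfolding line_poly_def
proof (rule degree_sum_le)
  show "finite {\<alpha>. c \<alpha> \<noteq> 0}" using assms(1) by (simp add: is_mpoly_def)
next
  fix \<alpha> assume "\<alpha> \<in> {\<alpha>. c \<alpha> \<noteq> 0}"
  then have "sum \<alpha> UNIV \<le> N" using assms(2) by (auto simp: mdeg_le_def)
  have "degree (\<Prod>j\<in>UNIV. [:a $ j, v $ j:] ^ \<alpha> j) \<le> (\<Sum>j\<in>UNIV. degree ([:a $ j, v $ j:] ^ \<alpha> j))"
    using degree_prod_sum_le[of UNIV "\<lambda>j. [:a $ j, v $ j:] ^ \<alpha> j"] by (simp add: comp_def)
  also have "\<dots> \<le> sum \<alpha> UNIV"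
    by (intro sum_mono order_trans[OF degree_power_le]) simp
  also have "\<dots> \<le> N" by fact
  finally show "degree (smult (c \<alpha>) (\<Prod>j\<in>UNIV. [:a $ j, v $ j:] ^ \<alpha> j)) \<le> N"
    by (rule order_trans[OF degree_smult_le])
qed

lemma poly_pderiv_line_poly:
  assumes "is_mpoly c"
  shows "poly (pderiv (line_poly c a v)) s = (\<Sum>k\<in>UNIV. v $ k * peval (pdiff k c) (a + s *\<^sub>R v))"
  by (rule poly_pderiv_eqI[OF poly_line_poly has_real_derivative_peval_line[OF assms]])

lemma poly_pderiv2_line_poly:
  assumes "is_mpoly c"
  shows "poly (pderiv (pderiv (line_poly c a v))) s =
    (\<Sum>k\<in>UNIV. v $ k * (\<Sum>l\<in>UNIV. v $ l * peval (pdiff l (pdiff k c)) (a + s *\<^sub>R v)))"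
  by (rule poly_pderiv_eqI[OF poly_pderiv_line_poly[OF assms]])
     (intro DERIV_sum DERIV_cmult has_real_derivative_peval_line is_mpoly_pdiff assms)

lemma quadratic_form_sum_squares:
  fixes v :: "'k \<Rightarrow> real" and f :: "'t \<Rightarrow> 'k \<Rightarrow> real"
  assumes "finite K" "finite T"
  shows "(\<Sum>k\<in>K. v k * (\<Sum>l\<in>K. v l * (\<Sum>t\<in>T. f t l * f t k))) = (\<Sum>t\<in>T. (\<Sum>k\<in>K. v k * f t k)^2)"
proof -
  have "(\<Sum>k\<in>K. v k * (\<Sum>l\<in>K. v l * (\<Sum>t\<in>T. f t l * f t k))) =
        (\<Sum>k\<in>K. \<Sum>l\<in>K. \<Sum>t\<in>T. (v l * f t l) * (v k * f t k))"
    by (simp add: sum_distrib_left mult_ac)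
  also have "\<dots> = (\<Sum>k\<in>K. \<Sum>t\<in>T. \<Sum>l\<in>K. (v l * f t l) * (v k * f t k))"
    by (rule sum.cong[OF refl]) (rule sum.swap)
  also have "\<dots> = (\<Sum>t\<in>T. \<Sum>k\<in>K. \<Sum>l\<in>K. (v l * f t l) * (v k * f t k))"
    by (rule sum.swap)
  also have "\<dots> = (\<Sum>t\<in>T. (\<Sum>k\<in>K. v k * f t k)^2)"
    by (simp add: power2_eq_square sum_distrib_left sum_distrib_right)
  finally show ?thesis .
qed

lemma sos_convex_hessian_form:
  fixes p :: "'n::finite mpoly_coeffs"
  assumes "sos_convex p"
  obtains q :: nat and F :: "nat \<Rightarrow> 'n \<Rightarrow> 'n mpoly_coeffs" where "\<And>t k. t < q \<Longrightarrow> is_mpoly (F t k)"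
    "\<And>x v. (\<Sum>k\<in>UNIV. v $ k * (\<Sum>l\<in>UNIV. v $ l * peval (pdiff l (pdiff k p)) x)) =
        (\<Sum>t<q. (\<Sum>k\<in>UNIV. v $ k * peval (F t k) x)^2)"
proof -
  obtain q and F :: "nat \<Rightarrow> 'n \<Rightarrow> 'n mpoly_coeffs" where F: "\<forall>t<q. \<forall>k. is_mpoly (F t k)"
    and hess: "\<forall>k l x. peval (pdiff k (pdiff l p)) x = (\<Sum>t<q. peval (F t k) x * peval (F t l) x)"
    using assms unfolding sos_convex_def by blast
  show ?thesis
  proof (rule that[of q F])
    show "is_mpoly (F t k)" if "t < q" for t k using F that by blast
    show "(\<Sum>k\<in>UNIV. v $ k * (\<Sum>l\<in>UNIV. v $ l * peval (pdiff l (pdiff k p)) x)) =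
        (\<Sum>t<q. (\<Sum>k\<in>UNIV. v $ k * peval (F t k) x)^2)" for x v
      using quadratic_form_sum_squares[of UNIV "{..<q}" "\<lambda>k. v $ k" "\<lambda>t k. peval (F t k) x"]
      by (simp add: hess)
  qed
qed

lemma ex_polyfun_directional_form:
  assumes "\<And>k. is_mpoly (F k)"
  shows "\<exists>E. polyfun E (\<lambda>X. \<Sum>k\<in>UNIV. (X - a) $ k * peval (F k) (a + s *\<^sub>R (X - a)))"
proof -
  have "\<exists>E. \<forall>k\<in>UNIV. polyfun E (peval (F k))"
    by (rule polyfun_uniform_degree) (simp_all add: polyfun_peval_exists assms)
  then obtain E where "\<forall>k\<in>UNIV. polyfun E (peval (F k))" ..
  moreover have "polyfun 1 (\<lambda>X. (X - a) $ k)" for k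
    using polyfun_diff[OF polyfun_coord polyfun_const, of 1 k "a $ k"] by simp
  ultimately have "polyfun (1 + E) (\<lambda>X. \<Sum>k\<in>UNIV. (X - a) $ k * peval (F k) (a + s *\<^sub>R (X - a)))"
    by (intro polyfun_sum polyfun_mult polyfun_comp_affine) auto
  then show ?thesis ..
qed

text \<open>By SOS-convexity the second \<open>s\<close>-derivative of \<open>p(a + s(X - a))\<close> is a sum of squares
  \<open>\<Sum>\<^sub>t G\<^sub>t(X)\<^sup>2\<close>; having degree at most \<open>2r\<close> in \<open>X\<close>, it forces \<open>deg G\<^sub>t \<le> r\<close>.\<close>
lemma riesz_line_poly_pderiv2_nonneg:
  fixes p :: "'n::finite mpoly_coeffs"
  assumes mp: "is_mpoly p" and dg: "mdeg_le p (2 * r)" and sc: "sos_convex p"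
    and D: "2 * r \<le> D" and psd: "psd_on (mono_set r) (moment_matrix D y)"
  shows "riesz D y (\<lambda>X. poly (pderiv (pderiv (line_poly p a (X - a)))) s) \<ge> 0"
proof -
  obtain q :: nat and F :: "nat \<Rightarrow> 'n \<Rightarrow> 'n mpoly_coeffs"
    where F: "\<And>t k. t < q \<Longrightarrow> is_mpoly (F t k)"
    and hess: "\<And>x v. (\<Sum>k\<in>UNIV. v $ k * (\<Sum>l\<in>UNIV. v $ l * peval (pdiff l (pdiff k p)) x)) =
        (\<Sum>t<q. (\<Sum>k\<in>UNIV. v $ k * peval (F t k) x)^2)"
    using sos_convex_hessian_form[OF sc] by blast
  define G where "G t X = (\<Sum>k\<in>UNIV. (X - a) $ k * peval (F t k) (a + s *\<^sub>R (X - a)))" for t X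
  have sum_sq: "poly (pderiv (pderiv (line_poly p a (X - a)))) s = (\<Sum>t<q. (G t X)^2)" for X
    using hess[where x = "a + s *\<^sub>R (X - a)" and v = "X - a"]
    by (simp add: poly_pderiv2_line_poly[OF mp] G_def)
  have deg: "degree (line_poly p a (X - a)) \<le> 2 * r" "degree (pderiv (line_poly p a (X - a))) \<le> 2 * r"
    for X using degree_line_poly[OF mp dg, of a "X - a"] by (auto simp: degree_pderiv)
  have "polyfun (2 * r) (\<lambda>X. poly (line_poly p a (X - a)) s)" for s
    by (simp add: poly_line_poly polyfun_comp_affine polyfun_peval mp dg)
  then have "polyfun (2 * r) (\<lambda>X. poly (pderiv (line_poly p a (X - a))) s)" for s
    by (rule polyfun_poly_family_pderiv[OF deg(1)])
  then have "polyfun (2 * r) (\<lambda>X. poly (pderiv (pderiv (line_poly p a (X - a)))) s)"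
    by (rule polyfun_poly_family_pderiv[OF deg(2)])
  then have sum_sq_pf: "polyfun (2 * r) (\<lambda>X. \<Sum>t<q. (G t X)^2)" by (simp add: sum_sq)
  have G_pf: "\<exists>E. polyfun E (G t)" if "t \<in> {..<q}" for t
    unfolding G_def by (rule ex_polyfun_directional_form) (use F that in simp)
  have "polyfun r (G t)" if "t < q" for t
    using that by (intro polyfun_half_degree_if_sum_squares[OF _ _ G_pf sum_sq_pf]) auto
  then show ?thesis
    unfolding sum_sq by (intro riesz_sum_squares_nonneg[OF _ _ D psd]) auto
qed

lemma riesz_line_poly_pderiv_at_mean:
  fixes p :: "'n::finite mpoly_coeffs"
  assumes mp: "is_mpoly p" and D: "1 \<le> D" and y0: "y (\<lambda>_. 0) = 1"
    and a: "a = (\<chi> k. y (unit_idx k))"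
  shows "riesz D y (\<lambda>X. poly (pderiv (line_poly p a (X - a))) 0) = 0"
proof -
  have deriv: "(\<lambda>X. poly (pderiv (line_poly p a (X - a))) 0) =
      (\<lambda>X. \<Sum>k\<in>UNIV. peval (pdiff k p) a * (X $ k - a $ k))"
    by (simp add: poly_pderiv_line_poly[OF mp] mult.commute)
  have "riesz D y (\<lambda>X. \<Sum>k\<in>UNIV. peval (pdiff k p) a * (X $ k - a $ k)) = (\<Sum>k\<in>UNIV. peval (pdiff k p) a * (riesz D y (\<lambda>X. X $ k) - a $ k))"
    using D by (simp add: riesz_sum riesz_cmult riesz_diff riesz_const y0 polyfun_cmult polyfun_diff
        polyfun_coord polyfun_const)
  also have "\<dots> = 0" using D by (simp add: riesz_coord a)
  finally show ?thesis unfolding deriv .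
qed

lemma le_if_critical_at_0_and_deriv2_nonneg:
  fixes \<phi> :: "real \<Rightarrow> real"
  assumes "\<And>s. (\<phi> has_real_derivative \<phi>1 s) (at s)" "\<And>s. (\<phi>1 has_real_derivative \<phi>2 s) (at s)"
    and "\<And>s. \<phi>2 s \<ge> 0" "\<phi>1 0 = 0"
  shows "\<phi> 0 \<le> \<phi> 1"
proof (rule deriv_nonneg_imp_mono[OF assms(1)])
  fix s :: real assume "s \<in> {0..1}"
  then show "\<phi>1 s \<ge> 0"
    using deriv_nonneg_imp_mono[of 0 s \<phi>1 \<phi>2] assms(2-4) by simp
qed simp

lemma riesz_sos_convex_jensen:
  fixes p :: "'n::finite mpoly_coeffs"
  assumes mp: "is_mpoly p" and dg: "mdeg_le p (2 * r)" and sc: "sos_convex p"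
    and D: "2 * r \<le> D" "1 \<le> D"
    and psd: "psd_on (mono_set r) (moment_matrix D y)" and y0: "y (\<lambda>_. 0) = 1"
  shows "peval p (\<chi> k. y (unit_idx k)) \<le> riesz D y (peval p)"
proof -
  define a :: "real^'n" where "a = (\<chi> k. y (unit_idx k))"
  define P where "P X = line_poly p a (X - a)" for X
  define \<phi> where "\<phi> s = riesz D y (\<lambda>X. poly (P X) s)" for s
  define \<phi>1 where "\<phi>1 s = riesz D y (\<lambda>X. poly (pderiv (P X)) s)" for s
  define \<phi>2 where "\<phi>2 s = riesz D y (\<lambda>X. poly (pderiv (pderiv (P X))) s)" for s
  have deg: "degree (P X) \<le> 2 * r" "degree (pderiv (P X)) \<le> 2 * r" for X
    using degree_line_poly[OF mp dg, of a "X - a"] by (auto simp: P_def degree_pderiv)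
  have pf: "polyfun D (\<lambda>X. poly (P X) s)" for s
    unfolding P_def poly_line_poly
    by (rule polyfun_mono[OF polyfun_comp_affine[OF polyfun_peval[OF mp dg]] D(1)])
  have "\<phi> 0 \<le> \<phi> 1"
  proof (rule le_if_critical_at_0_and_deriv2_nonneg)
    show "(\<phi> has_real_derivative \<phi>1 s) (at s)" for s
      unfolding \<phi>_def \<phi>1_def by (rule has_real_derivative_riesz_poly_family[OF deg(1) pf])
    show "(\<phi>1 has_real_derivative \<phi>2 s) (at s)" for s
      unfolding \<phi>1_def \<phi>2_def
      by (rule has_real_derivative_riesz_poly_family[OF deg(2) polyfun_poly_family_pderiv[OF deg(1) pf]])
    show "\<phi>2 s \<ge> 0" for s
      unfolding \<phi>2_def P_def by (rule riesz_line_poly_pderiv2_nonneg[OF mp dg sc D(1) psd])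
    show "\<phi>1 0 = 0"
      unfolding \<phi>1_def P_def by (rule riesz_line_poly_pderiv_at_mean[OF mp D(2) y0 a_def])
  qed
  moreover have "\<phi> 0 = peval p a" "\<phi> 1 = riesz D y (peval p)"
    by (simp_all add: \<phi>_def P_def poly_line_poly riesz_const y0)
  ultimately show ?thesis by (simp add: a_def)
qed

section \<open>The moment relaxation\<close>

lemma polyfun_separable_plus_mpoly:
  fixes u :: "'n::finite \<Rightarrow> real poly"
  assumes "\<And>j. degree (u j) \<le> D" "is_mpoly p" "mdeg_le p D"
  shows "polyfun D (\<lambda>x. (\<Sum>j\<in>UNIV. poly (u j) (x $ j)) + peval p x)"
  using assms by (intro polyfun_add polyfun_sum polyfun_univariate polyfun_peval) auto

lemma mdeg_le_separable_plus_mpoly: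
  fixes u :: "'n::finite \<Rightarrow> real poly"
  assumes "is_mpoly c" "\<And>x. peval c x = (\<Sum>j\<in>UNIV. poly (u j) (x $ j)) + peval p x"
    and "\<And>j. degree (u j) \<le> D" "is_mpoly p" "mdeg_le p D"
  shows "mdeg_le c D"
proof -
  have "peval c = (\<lambda>x. (\<Sum>j\<in>UNIV. poly (u j) (x $ j)) + peval p x)" using assms(2) by auto
  then show ?thesis
    using assms(1) polyfun_separable_plus_mpoly[OF assms(3-5)] by (simp add: mdeg_le_if_polyfun_peval)
qed

lemma spld_feasible_jensen:
  fixes u :: "'n::finite \<Rightarrow> real poly"
  assumes feas: "spld_feasible d0 m d r g y" and dj: "\<And>j. d j \<le> d0" and rd: "r < d0"
    and c: "is_mpoly c" "\<And>x. peval c x = (\<Sum>j\<in>UNIV. poly (u j) (x $ j)) + peval p x"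
    and u: "\<And>j. convex_on UNIV (poly (u j))" "\<And>j. degree (u j) \<le> 2 * d j"
    and p: "is_mpoly p" "mdeg_le p (2 * r)" "sos_convex p"
  shows "peval c (\<chi> k. y (unit_idx k)) \<le> lin_fun (2 * d0) c y"
proof -
  let ?D = "2 * d0"
  have psdu: "\<And>j. psd_on {0..d j} (univ_moment_matrix ?D y j)"
    and psd: "psd_on (mono_set r) (moment_matrix ?D y)" and y0: "y (\<lambda>_. 0) = 1"
    using feas by (auto simp: spld_feasible_def)
  have uD: "degree (u j) \<le> ?D" for j using u(2)[of j] dj[of j] by linarith
  have pD: "mdeg_le p ?D" using p(2) rd by (auto intro: mdeg_le_mono)
  have "peval c (\<chi> k. y (unit_idx k)) =
      (\<Sum>j\<in>UNIV. poly (u j) (y (unit_idx j))) + peval p (\<chi> k. y (unit_idx k))"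
    by (simp add: c(2))
  also have "\<dots> \<le> (\<Sum>j\<in>UNIV. riesz ?D y (\<lambda>x. poly (u j) (x $ j))) + riesz ?D y (peval p)"
  proof (intro add_mono sum_mono)
    show "poly (u j) (y (unit_idx j)) \<le> riesz ?D y (\<lambda>x. poly (u j) (x $ j))" for j
      using dj[of j] rd by (intro riesz_univariate_jensen[OF u(1,2) _ _ psdu y0]) auto
    show "peval p (\<chi> k. y (unit_idx k)) \<le> riesz ?D y (peval p)"
      using rd by (intro riesz_sos_convex_jensen[OF p _ _ psd y0]) auto
  qed
  also have "\<dots> = riesz ?D y (\<lambda>x. (\<Sum>j\<in>UNIV. poly (u j) (x $ j)) + peval p x)"
  proof -
    have pu: "polyfun ?D (\<lambda>x. poly (u j) (x $ j))" for j by (rule polyfun_univariate[OF uD])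
    have pp: "polyfun ?D (peval p)" by (rule polyfun_peval[OF p(1) pD])
    show ?thesis
      by (simp add: riesz_add[OF polyfun_sum[OF _ pu] pp] riesz_sum[OF _ pu])
  qed
  also have "\<dots> = lin_fun ?D c y"
  proof -
    have "(\<lambda>x. (\<Sum>j\<in>UNIV. poly (u j) (x $ j)) + peval p x) = peval c" using c(2) by auto
    then show ?thesis
      using riesz_peval[OF c(1) mdeg_le_separable_plus_mpoly[OF c uD p(1) pD]] by simp
  qed
  finally show ?thesis .
qed

lemma lin_fun_point_moments:
  assumes "is_mpoly c" "mdeg_le c D"
  shows "lin_fun D c (\<lambda>\<alpha>. monomial_val \<alpha> x) = peval c x"
  using peval_eq_mpoly_fun[OF assms] by (simp add: lin_fun_def mpoly_fun_def)

lemma psd_on_rank_one: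
  assumes "\<And>a b. a \<in> I \<Longrightarrow> b \<in> I \<Longrightarrow> M a b = w a * w b"
  shows "psd_on I M"
proof -
  have "(\<Sum>a\<in>I. \<Sum>b\<in>I. v a * M a b * v b) = (\<Sum>a\<in>I. \<Sum>b\<in>I. v a * (w a * w b) * v b)" for v
    using assms by (intro sum.cong refl) simp
  also have "\<dots> v = (\<Sum>a\<in>I. v a * w a)^2" for v
    by (simp add: power2_eq_square sum_distrib_left sum_distrib_right mult_ac)
  finally show ?thesis by (simp add: psd_on_def)
qed

lemma spld_feasible_point_moments:
  assumes g: "\<forall>i\<in>{1..m}. is_mpoly (g i) \<and> mdeg_le (g i) (2 * d0)"
    and x: "\<forall>i\<in>{1..m}. peval (g i) x \<le> 0" and dj: "\<And>j. d j \<le> d0" and rd: "r \<le> d0"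
  shows "spld_feasible d0 m d r g (\<lambda>\<alpha>. monomial_val \<alpha> x)"
  unfolding spld_feasible_def
proof (intro conjI ballI allI)
  show "lin_fun (2 * d0) (g i) (\<lambda>\<alpha>. monomial_val \<alpha> x) \<le> 0" if "i \<in> {1..m}" for i
    using g x that by (simp add: lin_fun_point_moments)
  show "psd_on {0..d j} (univ_moment_matrix (2 * d0) (\<lambda>\<alpha>. monomial_val \<alpha> x) j)" for j
    using dj[of j] by (intro psd_on_rank_one[where w = "\<lambda>a. (x $ j)^a"])
      (simp add: univ_moment_matrix_eq monomial_val_pow_idx power_add)
  show "psd_on (mono_set r) (moment_matrix (2 * d0) (\<lambda>\<alpha>. monomial_val \<alpha> x))"
    using rd by (intro psd_on_rank_one[where w = "\<lambda>\<beta>. monomial_val \<beta> x"])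
      (simp add: moment_matrix_eq monomial_val_add)
qed simp

theorem theorem5:
  fixes f :: "'n::finite mpoly_coeffs"
    and g :: "nat \<Rightarrow> 'n mpoly_coeffs"
    and u :: "nat \<Rightarrow> 'n \<Rightarrow> real poly"
    and p :: "nat \<Rightarrow> 'n mpoly_coeffs"
    and d :: "'n \<Rightarrow> nat" and r m d0 :: nat
    and ybar :: "('n \<Rightarrow> nat) \<Rightarrow> real"
  assumes f_poly: "is_mpoly f"
    and g_poly: "\<forall>i\<in>{1..m}. is_mpoly (g i)"
    and f_convex: "convex_on UNIV (peval f)"
    and g_convex: "\<forall>i\<in>{1..m}. convex_on UNIV (peval (g i))"
    and u_deg: "\<forall>i\<in>{0..m}. \<forall>j. degree (u i j) \<le> 2 * d j"
    and u_convex: "\<forall>i\<in>{0..m}. \<forall>j. convex_on UNIV (poly (u i j))"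
    and p_poly: "\<forall>i\<in>{0..m}. is_mpoly (p i) \<and> mdeg_le (p i) (2 * r) \<and> sos_convex (p i)"
    and f_decomp: "\<forall>x. peval f x = (\<Sum>j\<in>UNIV. poly (u 0 j) (x $ j)) + peval (p 0) x"
    and g_decomp: "\<forall>i\<in>{1..m}. \<forall>x. peval (g i) x = (\<Sum>j\<in>UNIV. poly (u i j) (x $ j)) + peval (p i) x"
    and d0_def: "d0 = Max (range d)"
    and d0_gt: "d0 > r"
    and bdd: "\<exists>c. \<forall>x. (\<forall>i\<in>{1..m}. peval (g i) x \<le> 0) \<longrightarrow> c \<le> peval f x"
    and slater: "\<exists>xh. \<forall>i\<in>{1..m}. peval (g i) xh < 0"
    and opt: "spld_optimal d0 m d r f g ybar"
  shows "(\<forall>i\<in>{1..m}. peval (g i) (\<chi> j. ybar (unit_idx j)) \<le> 0) \<and>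
         (\<forall>x. (\<forall>i\<in>{1..m}. peval (g i) x \<le> 0) \<longrightarrow>
              peval f (\<chi> j. ybar (unit_idx j)) \<le> peval f x)"
proof -
  let ?xbar = "\<chi> j. ybar (unit_idx j)"
  have feas: "spld_feasible d0 m d r g ybar"
    and min: "\<And>y. spld_feasible d0 m d r g y \<Longrightarrow> lin_fun (2 * d0) f ybar \<le> lin_fun (2 * d0) f y"
    using opt by (simp_all add: spld_optimal_def)
  have dj: "d j \<le> d0" for j unfolding d0_def by (rule Max_ge) auto
  have uD: "degree (u i j) \<le> 2 * d0" if "i \<in> {0..m}" for i j
    using u_deg that dj[of j] by (meson mult_le_mono2 order_trans)
  have pD: "mdeg_le (p i) (2 * d0)" if "i \<in> {0..m}" for i
    using p_poly that d0_gt mdeg_le_mono[of "p i" "2 * r" "2 * d0"] by auto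
  have deg: "mdeg_le c (2 * d0)" and jensen: "peval c ?xbar \<le> lin_fun (2 * d0) c ybar"
    if c: "is_mpoly c" "\<And>x. peval c x = (\<Sum>j\<in>UNIV. poly (u i j) (x $ j)) + peval (p i) x"
      and i: "i \<in> {0..m}" for c i
    using u_convex u_deg p_poly uD[OF i] pD[OF i] i
    by (auto intro!: mdeg_le_separable_plus_mpoly[OF c] spld_feasible_jensen[OF feas dj d0_gt c])
  have f_deg: "mdeg_le f (2 * d0)"
    using deg[OF f_poly f_decomp[rule_format]] by simp
  have g_deg: "\<forall>i\<in>{1..m}. is_mpoly (g i) \<and> mdeg_le (g i) (2 * d0)"
    using g_poly deg[OF g_poly[rule_format] g_decomp[rule_format]] by auto
  have "peval (g i) ?xbar \<le> 0" if "i \<in> {1..m}" for i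
    using jensen[OF g_poly[rule_format, OF that] g_decomp[rule_format, OF that]] that feas
    by (force simp: spld_feasible_def)
  moreover have "peval f ?xbar \<le> peval f x" if "\<forall>i\<in>{1..m}. peval (g i) x \<le> 0" for x
    using min[OF spld_feasible_point_moments[OF g_deg that dj]] d0_gt f_deg
      jensen[OF f_poly f_decomp[rule_format]] lin_fun_point_moments[OF f_poly f_deg] by fastforce
  ultimately show ?thesis by blast
qed

end
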